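(* Let $A=kQ/I$ be a gentle algebra with connected quiver, with ribbon surface $S_A$, marked points $M$ and lamination $L_A$, and let $B_1,\dots,B_n$ be the boundary components of $S_A$. For each $i$ let $b_i$ be the number of marked points on $B_i$, let $l_i$ be the number of endpoints of laminates of $L_A$ lying on $B_i$ (a laminate with both endpoints on $B_i$ counted twice), and let $c_i=l_i-b_i$. Then the AG-invariant of $A$ is given by the multiset of pairs $\{(b_i,c_i):1\le i\le n\}$; that is, $\phi_A(x,y)=\#\{i:(b_i,c_i)=(x,y)\}$. Furthermore, if $b_i\ne0$, then $c_i=\sum_j(k_j-2)$, where $j$ runs over the pieces of $S_A$ cut out by the edges of $\Gamma_A$ that are $k_j$-gons having a side which is a boundary segment of $B_i$.
   Context: $A=kQ/I$ gentle: finite quiver, admissible ideal generated by length-2 paths, each arrow $\alpha$ has at most one $\beta$ with $\alpha\beta\in I$, at most one $\gamma$ with $\gamma\alpha\in I$, at most one $\beta'$ with $\alpha\beta'\notin I$, at most one $\gamma'$ with $\gamma'\alpha\notin I$ (paths composed left to right). $\mathcal M$: maximal paths $w\notin I$; $\mathcal M_0$: trivial paths $e_v$ with $v$ incident to exactly one arrow, or target of exactly one $\alpha$ and source of exactly one $\beta$ with $\alpha\beta\notin I$; $\overline{\mathcal M}=\mathcal M\cup\mathcal M_0$. $\Gamma_A$: marked ribbon graph with vertices $\overline{\mathcal M}$, one half-edge labelled $i$ per passage of $\omega$ through vertex $i$ of $Q$, the two half-edges labelled $i$ forming an edge, cyclic order following $\omega$ (end back to start), marking at the end. $S_A$: its ribbon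 surface (one $2d$-gon per vertex of valency $d$, alternate sides labelled by half-edges, paired sides glued), with $\Gamma_A$ embedded so that its vertices are the marked points $M\subset\partial S_A$. The edges of $\Gamma_A$ cut $S_A$ into polygons, each having either exactly one side on the boundary or enclosing an unmarked boundary component. $L_A$: the lamination with one simple curve (between unmarked boundary points) per vertex $i$ of $Q$, crossing edge $i$ of $\Gamma_A$ once and no other edge. AG-invariant: let $\mathcal F$ be the set of paths $\alpha_1\cdots\alpha_r$ ($r\ge1$) with all $\alpha_j\alpha_{j+1}\in I$, maximal with this property, and $\mathcal F_0=\{e_v\}$ for $v$ incident to exactly one arrow or target of exactly one $\alpha$ and source of exactly one $\beta$ with $\alpha\beta\in I$. Start with $H_0=m_0\in\overline{\mathcal M}$. Given $H_i=m_i$, let $F_i=f_i$ be the unique element of $\mathcal F$ with $t(f_i)=t(m_i)$ such that, if $m_i=p\alpha$ with $\alpha$ an arrow, then $f_i=q\beta$ with $\beta\ne\alpha$ an arrow; if none exists, $f_i=e_{t(m_i)}\in\mathcal F_0$. Let $H_{i+1}=m_{i+1}$ be the unique element of $\mathcal M$ with $s(m_{i+1})=s(f_i)$ such that, if $f_i=\gamma q$ with $\gamma$ an arrow, then $m_{i+1}=\delta r$ with $\delta\ne\gamma$ an arrow; if none exists, $m_{i+1}=e_{s(f_i)}\in\mathcal M_0$. Stop at the first $k$ with $H_k=H_0$ and record the pair $(k,\ell)$, $\ell$ the total number of arrows in $F_0,\dots,F_{k-1}$. Repeat from elements of $\overline{\mathcal M}$ not yet reached until each element of $\overline{\mathcal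 M}$ has occurred once; then add a pair $(0,m)$ for each oriented cycle $\alpha_1\cdots\alpha_m$ with all consecutive compositions (including $\alpha_m\alpha_1$) in $I$, counted up to rotation. $\phi_A:\mathbb N\times\mathbb N\to\mathbb N$ sends $(x,y)$ to the number of recorded pairs equal to $(x,y)$. *)

theory Defs
  imports Main
begin

(* The ideal I is the monomial ideal generated by the length-2 paths
   alpha beta with (alpha, beta) in R.  Paths are composed left to right.
   A path is represented as (v, as): v is its source vertex, as the list
   of arrows (empty list = trivial path e_v). *)

type_synonym ('v,'a) qpath = "'v \<times> 'a list"

definition composable :: "('a \<Rightarrow> 'v) \<Rightarrow> ('a \<Rightarrow> 'v) \<Rightarrow> 'a list \<Rightarrow> bool" where
  "composable s t as \<longleftrightarrow> (\<forall>j. Suc j < length as \<longrightarrow> t (as ! j) = s (as ! Suc j))"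

(* the path does not lie in I *)
definition nonrel :: "('a \<times> 'a) set \<Rightarrow> 'a list \<Rightarrow> bool" where
  "nonrel R as \<longleftrightarrow> (\<forall>j. Suc j < length as \<longrightarrow> (as ! j, as ! Suc j) \<notin> R)"

definition allrel :: "('a \<times> 'a) set \<Rightarrow> 'a list \<Rightarrow> bool" where
  "allrel R as \<longleftrightarrow> (\<forall>j. Suc j < length as \<longrightarrow> (as ! j, as ! Suc j) \<in> R)"

definition is_path :: "'v set \<Rightarrow> 'a set \<Rightarrow> ('a \<Rightarrow> 'v) \<Rightarrow> ('a \<Rightarrow> 'v) \<Rightarrow> ('v,'a) qpath \<Rightarrow> bool" where
  "is_path V E s t p \<longleftrightarrow> fst p \<in> V \<and> set (snd p) \<subseteq> E \<and> composable s t (snd p)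
     \<and> (snd p \<noteq> [] \<longrightarrow> s (hd (snd p)) = fst p)"

definition ptgt :: "('a \<Rightarrow> 'v) \<Rightarrow> ('v,'a) qpath \<Rightarrow> 'v" where
  "ptgt t p = (if snd p = [] then fst p else t (last (snd p)))"

definition indeg :: "'a set \<Rightarrow> ('a \<Rightarrow> 'v) \<Rightarrow> 'v \<Rightarrow> nat" where
  "indeg E t v = card {\<alpha>\<in>E. t \<alpha> = v}"

definition outdeg :: "'a set \<Rightarrow> ('a \<Rightarrow> 'v) \<Rightarrow> 'v \<Rightarrow> nat" where
  "outdeg E s v = card {\<alpha>\<in>E. s \<alpha> = v}"

definition gentle :: "'v set \<Rightarrow> 'a set \<Rightarrow> ('a \<Rightarrow> 'v) \<Rightarrow> ('a \<Rightarrow> 'v) \<Rightarrow> ('a \<times> 'a) set \<Rightarrow> bool" where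
  "gentle V E s t R \<longleftrightarrow>
     finite V \<and> finite E \<and> (\<forall>\<alpha>\<in>E. s \<alpha> \<in> V \<and> t \<alpha> \<in> V)
   \<and> R \<subseteq> {(\<alpha>,\<beta>). \<alpha> \<in> E \<and> \<beta> \<in> E \<and> t \<alpha> = s \<beta>}
   \<and> (\<exists>N. \<forall>as. set as \<subseteq> E \<longrightarrow> composable s t as \<longrightarrow> N \<le> length as \<longrightarrow> \<not> nonrel R as)
   \<and> (\<forall>v\<in>V. outdeg E s v \<le> 2 \<and> indeg E t v \<le> 2)
   \<and> (\<forall>\<alpha>\<in>E. card {\<beta>\<in>E. (\<alpha>,\<beta>) \<in> R} \<le> 1
            \<and> card {\<gamma>\<in>E. (\<gamma>,\<alpha>) \<in> R} \<le> 1
            \<and> card {\<beta>\<in>E. s \<beta> = t \<alpha> \<and> (\<alpha>,\<beta>) \<notin> R} \<le> 1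
            \<and> card {\<gamma>\<in>E. t \<gamma> = s \<alpha> \<and> (\<gamma>,\<alpha>) \<notin> R} \<le> 1)"

definition connected_quiver :: "'v set \<Rightarrow> 'a set \<Rightarrow> ('a \<Rightarrow> 'v) \<Rightarrow> ('a \<Rightarrow> 'v) \<Rightarrow> bool" where
  "connected_quiver V E s t \<longleftrightarrow>
     (\<forall>u\<in>V. \<forall>w\<in>V. (u, w) \<in> ({(s \<alpha>, t \<alpha>) | \<alpha>. \<alpha> \<in> E} \<union> {(t \<alpha>, s \<alpha>) | \<alpha>. \<alpha> \<in> E})\<^sup>*)"

definition max_paths :: "'v set \<Rightarrow> 'a set \<Rightarrow> ('a \<Rightarrow> 'v) \<Rightarrow> ('a \<Rightarrow> 'v) \<Rightarrow> ('a \<times> 'a) set \<Rightarrow> ('v,'a) qpath set" where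
  "max_paths V E s t R = {p. is_path V E s t p \<and> nonrel R (snd p)
      \<and> \<not> (\<exists>\<alpha>\<in>E. s \<alpha> = ptgt t p \<and> nonrel R (snd p @ [\<alpha>]))
      \<and> \<not> (\<exists>\<alpha>\<in>E. t \<alpha> = fst p \<and> nonrel R (\<alpha> # snd p))}"

definition M0 :: "'v set \<Rightarrow> 'a set \<Rightarrow> ('a \<Rightarrow> 'v) \<Rightarrow> ('a \<Rightarrow> 'v) \<Rightarrow> ('a \<times> 'a) set \<Rightarrow> ('v,'a) qpath set" where
  "M0 V E s t R = {(v, []) | v. v \<in> V \<and>
      (indeg E t v + outdeg E s v = 1 \<or>
       (indeg E t v = 1 \<and> outdeg E s v = 1 \<and>
        (\<forall>\<alpha>\<in>E. \<forall>\<beta>\<in>E. t \<alpha> = v \<longrightarrow> s \<beta> = v \<longrightarrow> (\<alpha>,\<beta>) \<notin> R)))}"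

definition Mbar :: "'v set \<Rightarrow> 'a set \<Rightarrow> ('a \<Rightarrow> 'v) \<Rightarrow> ('a \<Rightarrow> 'v) \<Rightarrow> ('a \<times> 'a) set \<Rightarrow> ('v,'a) qpath set" where
  "Mbar V E s t R = max_paths V E s t R \<union> M0 V E s t R"

definition F_paths :: "'v set \<Rightarrow> 'a set \<Rightarrow> ('a \<Rightarrow> 'v) \<Rightarrow> ('a \<Rightarrow> 'v) \<Rightarrow> ('a \<times> 'a) set \<Rightarrow> ('v,'a) qpath set" where
  "F_paths V E s t R = {p. is_path V E s t p \<and> snd p \<noteq> [] \<and> allrel R (snd p)
      \<and> \<not> (\<exists>\<alpha>\<in>E. s \<alpha> = ptgt t p \<and> allrel R (snd p @ [\<alpha>]))
      \<and> \<not> (\<exists>\<alpha>\<in>E. t \<alpha> = fst p \<and> allrel R (\<alpha> # snd p))}"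

definition F_next :: "'v set \<Rightarrow> 'a set \<Rightarrow> ('a \<Rightarrow> 'v) \<Rightarrow> ('a \<Rightarrow> 'v) \<Rightarrow> ('a \<times> 'a) set \<Rightarrow> ('v,'a) qpath \<Rightarrow> ('v,'a) qpath" where
  "F_next V E s t R m =
     (let v = ptgt t m;
          P = (\<lambda>f. f \<in> F_paths V E s t R \<and> ptgt t f = v
                    \<and> (snd m \<noteq> [] \<longrightarrow> last (snd f) \<noteq> last (snd m)))
      in if \<exists>f. P f then (THE f. P f) else (v, []))"

definition M_next :: "'v set \<Rightarrow> 'a set \<Rightarrow> ('a \<Rightarrow> 'v) \<Rightarrow> ('a \<Rightarrow> 'v) \<Rightarrow> ('a \<times> 'a) set \<Rightarrow> ('v,'a) qpath \<Rightarrow> ('v,'a) qpath" where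
  "M_next V E s t R f =
     (let v = fst f;
          P = (\<lambda>m. m \<in> max_paths V E s t R \<and> fst m = v
                    \<and> (snd f \<noteq> [] \<longrightarrow> snd m \<noteq> [] \<and> hd (snd m) \<noteq> hd (snd f)))
      in if \<exists>m. P m then (THE m. P m) else (v, []))"

definition AG_step :: "'v set \<Rightarrow> 'a set \<Rightarrow> ('a \<Rightarrow> 'v) \<Rightarrow> ('a \<Rightarrow> 'v) \<Rightarrow> ('a \<times> 'a) set \<Rightarrow> ('v,'a) qpath \<Rightarrow> ('v,'a) qpath" where
  "AG_step V E s t R m = M_next V E s t R (F_next V E s t R m)"

definition AG_k :: "'v set \<Rightarrow> 'a set \<Rightarrow> ('a \<Rightarrow> 'v) \<Rightarrow> ('a \<Rightarrow> 'v) \<Rightarrow> ('a \<times> 'a) set \<Rightarrow> ('v,'a) qpath \<Rightarrow> nat" where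
  "AG_k V E s t R m = (LEAST k. 0 < k \<and> (AG_step V E s t R ^^ k) m = m)"

definition AG_l :: "'v set \<Rightarrow> 'a set \<Rightarrow> ('a \<Rightarrow> 'v) \<Rightarrow> ('a \<Rightarrow> 'v) \<Rightarrow> ('a \<times> 'a) set \<Rightarrow> ('v,'a) qpath \<Rightarrow> nat" where
  "AG_l V E s t R m = (\<Sum>i < AG_k V E s t R m. length (snd (F_next V E s t R ((AG_step V E s t R ^^ i) m))))"

definition AG_run :: "'v set \<Rightarrow> 'a set \<Rightarrow> ('a \<Rightarrow> 'v) \<Rightarrow> ('a \<Rightarrow> 'v) \<Rightarrow> ('a \<times> 'a) set \<Rightarrow> ('v,'a) qpath \<Rightarrow> ('v,'a) qpath set" where
  "AG_run V E s t R m = (\<lambda>i. (AG_step V E s t R ^^ i) m) ` {..< AG_k V E s t R m}"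

definition full_rel_cycles :: "'a set \<Rightarrow> ('a \<times> 'a) set \<Rightarrow> 'a list set" where
  "full_rel_cycles E R = {cs. cs \<noteq> [] \<and> distinct cs \<and> set cs \<subseteq> E
      \<and> (\<forall>j < length cs. (cs ! j, cs ! (Suc j mod length cs)) \<in> R)}"

definition rot_class :: "'a list \<Rightarrow> 'a list set" where
  "rot_class cs = range (\<lambda>i. rotate i cs)"

definition AG_phi :: "'v set \<Rightarrow> 'a set \<Rightarrow> ('a \<Rightarrow> 'v) \<Rightarrow> ('a \<Rightarrow> 'v) \<Rightarrow> ('a \<times> 'a) set \<Rightarrow> nat \<Rightarrow> nat \<Rightarrow> nat" where
  "AG_phi V E s t R x y =
     card (AG_run V E s t R ` {m \<in> Mbar V E s t R. AG_k V E s t R m = x \<and> AG_l V E s t R m = y})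
   + (if x = 0 then card (rot_class ` {cs \<in> full_rel_cycles E R. length cs = y}) else 0)"

(* ---- The marked ribbon graph Gamma_A and its ribbon surface (combinatorially) ----
   Half-edges: (m, p) with m in Mbar and p the index of the p-th passage of m
   through a vertex of Q (p = 0 .. length m). *)

definition half_edges :: "'v set \<Rightarrow> 'a set \<Rightarrow> ('a \<Rightarrow> 'v) \<Rightarrow> ('a \<Rightarrow> 'v) \<Rightarrow> ('a \<times> 'a) set \<Rightarrow> (('v,'a) qpath \<times> nat) set" where
  "half_edges V E s t R = {h. fst h \<in> Mbar V E s t R \<and> snd h \<le> length (snd (fst h))}"

definition he_label :: "('a \<Rightarrow> 'v) \<Rightarrow> ('v,'a) qpath \<times> nat \<Rightarrow> 'v" where
  "he_label t h = (if snd h = 0 then fst (fst h) else t (snd (fst h) ! (snd h - 1)))"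

(* cyclic order at a vertex of Gamma_A: follows the path, end back to start *)
definition he_next :: "('v,'a) qpath \<times> nat \<Rightarrow> ('v,'a) qpath \<times> nat" where
  "he_next h = (fst h, if snd h = length (snd (fst h)) then 0 else Suc (snd h))"

(* the corner (h, he_next h) carries the marking iff h is the last passage *)
definition he_marked :: "('v,'a) qpath \<times> nat \<Rightarrow> bool" where
  "he_marked h \<longleftrightarrow> snd h = length (snd (fst h))"

definition he_partner :: "'v set \<Rightarrow> 'a set \<Rightarrow> ('a \<Rightarrow> 'v) \<Rightarrow> ('a \<Rightarrow> 'v) \<Rightarrow> ('a \<times> 'a) set \<Rightarrow> ('v,'a) qpath \<times> nat \<Rightarrow> ('v,'a) qpath \<times> nat" where
  "he_partner V E s t R h = (SOME h'. h' \<in> half_edges V E s t R \<and> h' \<noteq> h \<and> he_label t h' = he_label t h)"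

(* boundary walk of the ribbon surface: from corner (h, next h) follow the edge
   of next h to the next corner *)
definition face :: "'v set \<Rightarrow> 'a set \<Rightarrow> ('a \<Rightarrow> 'v) \<Rightarrow> ('a \<Rightarrow> 'v) \<Rightarrow> ('a \<times> 'a) set \<Rightarrow> ('v,'a) qpath \<times> nat \<Rightarrow> ('v,'a) qpath \<times> nat" where
  "face V E s t R h = he_partner V E s t R (he_next h)"

(* boundary components of S_A, each given as its set of corners *)
definition bdry_comps :: "'v set \<Rightarrow> 'a set \<Rightarrow> ('a \<Rightarrow> 'v) \<Rightarrow> ('a \<Rightarrow> 'v) \<Rightarrow> ('a \<times> 'a) set \<Rightarrow> (('v,'a) qpath \<times> nat) set set" where
  "bdry_comps V E s t R = (\<lambda>h. range (\<lambda>n. (face V E s t R ^^ n) h)) ` half_edges V E s t R"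

definition n_marked :: "(('v,'a) qpath \<times> nat) set \<Rightarrow> nat" where
  "n_marked B = card {h \<in> B. he_marked h}"

(* The laminate of vertex i crosses the edge
   formed by the two half-edges labelled i; its endpoint on the side of that
   edge belonging to half-edge h lies on the boundary component containing the
   corner preceding h.  So endpoints correspond to half-edges h = he_next c, c in B. *)
definition n_lam_ends :: "'v set \<Rightarrow> 'a set \<Rightarrow> ('a \<Rightarrow> 'v) \<Rightarrow> ('a \<Rightarrow> 'v) \<Rightarrow> ('a \<times> 'a) set \<Rightarrow> (('v,'a) qpath \<times> nat) set \<Rightarrow> nat" where
  "n_lam_ends V E s t R B = card {h \<in> half_edges V E s t R. \<exists>c\<in>B. he_next c = h}"

definition c_val :: "'v set \<Rightarrow> 'a set \<Rightarrow> ('a \<Rightarrow> 'v) \<Rightarrow> ('a \<Rightarrow> 'v) \<Rightarrow> ('a \<times> 'a) set \<Rightarrow> (('v,'a) qpath \<times> nat) set \<Rightarrow> int" where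
  "c_val V E s t R B = int (n_lam_ends V E s t R B) - int (n_marked B)"

(* the piece of S_A cut out by Gamma_A whose boundary side starts at the marked
   corner c: it has as sides the edges traversed until the next marked corner
   plus one boundary segment; this is its number of sides k *)
definition piece_sides :: "'v set \<Rightarrow> 'a set \<Rightarrow> ('a \<Rightarrow> 'v) \<Rightarrow> ('a \<Rightarrow> 'v) \<Rightarrow> ('a \<times> 'a) set \<Rightarrow> ('v,'a) qpath \<times> nat \<Rightarrow> nat" where
  "piece_sides V E s t R c = (LEAST n. 0 < n \<and> he_marked ((face V E s t R ^^ n) c)) + 1"

end

theory Submission
  imports Defs
begin

text \<open>
  The half-edges of \<open>\<Gamma>\<^sub>A\<close> are the passages \<open>(m, p)\<close> of the paths \<open>m\<close> of \<open>Mbar\<close> through the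
  vertices of \<open>Q\<close>.  Every arrow lies on exactly one maximal path, so it leaves exactly one
  half-edge and enters exactly one, and a count of in- and out-arrows shows that every vertex labels
  exactly two half-edges; pairing them gives the edges of \<open>\<Gamma>\<^sub>A\<close>.  The boundary components of
  \<open>S\<^sub>A\<close> are the cycles of the walk \<open>h \<mapsto> partner (next h)\<close>.  If \<open>\<alpha>\<beta> \<in> I\<close>, the walk leads
  from the half-edge where \<open>\<alpha>\<close> leaves to the one where \<open>\<beta>\<close> leaves; hence from the marked corner of
  \<open>H\<^sub>i\<^sub>+\<^sub>1\<close> the walk runs through the arrows of \<open>F\<^sub>i\<close> and arrives at the marked corner of \<open>H\<^sub>i\<close>.
  So the marked corners of a component form one orbit of the AG step (\<open>b = k\<close>), and the component
  has \<open>k + \<ell>\<close> corners, each carrying one laminate endpoint (\<open>c = \<ell>\<close>).  Components without marked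
  corners are walked entirely along relations; they are the cycles of full relations.  The formula
  for \<open>c\<close> through the polygons regroups the same count by the stretches between consecutive marked
  corners.
\<close>

lemma card_le_1_eq: "finite S \<Longrightarrow> card S \<le> 1 \<Longrightarrow> x \<in> S \<Longrightarrow> y \<in> S \<Longrightarrow> x = y"
  by (auto simp: card_le_Suc0_iff_eq)

lemma finite_set_card_le_2_cases:
  assumes "finite X" "card X \<le> 2"
  obtains "X = {}" | x where "X = {x}" | x y where "x \<noteq> y" "X = {x, y}"
proof -
  consider "card X = 0" | "card X = 1" | "card X = 2" using assms(2) by linarith
  then show ?thesis using assms(1) that by cases (auto simp: card_1_singleton_iff card_2_iff)
qed

lemma card_image_eq_if_same_fibres:
  assumes "\<And>x y. x \<in> T \<Longrightarrow> y \<in> T \<Longrightarrow> f x = f y \<longleftrightarrow> g x = g y"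
  shows "card (f ` T) = card (g ` T)"
proof -
  define h where "h u = g (inv_into T f u)" for u
  have h_f: "h (f x) = g x" if "x \<in> T" for x
    using assms[of "inv_into T f (f x)" x] that inv_into_into[of "f x" f T] f_inv_into_f[of "f x" f T]
    unfolding h_def by auto
  then have "g ` T = h ` f ` T" by (auto simp: image_image)
  moreover have "inj_on h (f ` T)" by (rule inj_onI) (auto simp: h_f assms)
  ultimately show ?thesis by (simp add: card_image)
qed

lemma composable_iff_successively: "composable s t xs \<longleftrightarrow> successively (\<lambda>a b. t a = s b) xs"
  unfolding composable_def successively_conv_nth ..

lemma allrel_iff_successively: "allrel R xs \<longleftrightarrow> successively (\<lambda>a b. (a, b) \<in> R) xs"
  unfolding allrel_def successively_conv_nth ..

lemma rot_class_rotate: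
  assumes "cs \<noteq> []" shows "rot_class (rotate a cs) = rot_class cs"
proof -
  have "rotate j cs = rotate (j + (length cs - 1) * a + a) cs" for j
  proof -
    have "j + (length cs - 1) * a + a = j + length cs * a" using assms by (cases "length cs") auto
    then show ?thesis by (metis mod_mult_self2 rotate_conv_mod)
  qed
  then show ?thesis unfolding rot_class_def by (auto simp: rotate_rotate)
qed

lemma successively_set_subset:
  assumes "\<And>a b. Q a b \<Longrightarrow> a \<in> S \<and> b \<in> S" and "successively Q xs" and "set xs \<inter> S \<noteq> {}"
  shows "set xs \<subseteq> S"
  using assms(2,3)
proof (induction xs)
  case (Cons x xs)
  show ?case
  proof (cases "xs = []")
    case False
    then have "Q x (hd xs)" "successively Q xs" using Cons.prems by (auto simp: successively_Cons)
    then show ?thesis using Cons.IH assms(1) False by (metis disjoint_iff hd_in_set insert_subset list.simps(15))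
  qed (use Cons.prems in auto)
qed simp

lemma last_if_no_successor:
  assumes "successively Q xs" and "a \<in> set xs" and "\<forall>b. \<not> Q a b"
  shows "last xs = a"
proof -
  obtain i where i: "i < length xs" "xs ! i = a" using assms(2) by (metis in_set_conv_nth)
  have "\<not> Suc i < length xs" using successively_nth[OF assms(1)] i assms(3) by metis
  then have "i = length xs - 1" using i(1) by simp
  then show ?thesis using i last_conv_nth[of xs] by (cases "xs = []") auto
qed

section \<open>Chains of a partial bijection\<close>

locale partial_bijection =
  fixes Q :: "'a \<Rightarrow> 'a \<Rightarrow> bool"
  assumes succ_unique: "Q a b \<Longrightarrow> Q a b' \<Longrightarrow> b = b'"
    and pred_unique: "Q a b \<Longrightarrow> Q a' b \<Longrightarrow> a = a'"

begin

definition maximal_chain :: "'a list \<Rightarrow> bool" where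
  "maximal_chain xs \<longleftrightarrow> xs \<noteq> [] \<and> successively Q xs \<and> (\<forall>b. \<not> Q (last xs) b) \<and> (\<forall>a. \<not> Q a (hd xs))"

lemma chains_agree_forward:
  assumes "successively Q xs" "successively Q ys" "xs ! i = ys ! j"
    and "i + d < length xs" "j + d < length ys"
  shows "xs ! (i + d) = ys ! (j + d)"
  using assms(4,5)
proof (induction d)
  case (Suc d)
  then have "Q (xs ! (i + d)) (xs ! (i + Suc d))" "Q (ys ! (j + d)) (ys ! (j + Suc d))"
    using assms(1,2) by (auto simp: successively_conv_nth)
  with Suc show ?case using succ_unique by auto
qed (use assms(3) in simp)

lemma chains_agree_backward:
  assumes "successively Q xs" "successively Q ys" "xs ! i = ys ! j"
    and "i < length xs" "j < length ys" "d \<le> i" "d \<le> j"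
  shows "xs ! (i - d) = ys ! (j - d)"
  using assms(6,7)
proof (induction d)
  case (Suc d)
  then have "Q (xs ! (i - Suc d)) (xs ! (i - d))" "Q (ys ! (j - Suc d)) (ys ! (j - d))"
    using assms(1,2,4,5) successively_nth[of Q xs "i - Suc d"] successively_nth[of Q ys "j - Suc d"]
    by (auto simp: Suc_diff_Suc)
  with Suc show ?case using pred_unique by auto
qed (use assms(3) in simp)

lemma maximal_chain_extends_furthest:
  assumes xs: "maximal_chain xs" and ys: "successively Q ys"
    and eq: "xs ! i = ys ! j" and "i < length xs" "j < length ys"
  shows "j \<le> i \<and> length ys - j \<le> length xs - i"
proof (intro conjI; rule ccontr)
  have cx: "successively Q xs" using xs unfolding maximal_chain_def by blast
  {
    assume "\<not> j \<le> i"
    then have "xs ! 0 = ys ! (j - i)" using chains_agree_backward[OF cx ys eq, of i] assms(4,5) by simp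
    moreover have "Q (ys ! (j - i - 1)) (ys ! (j - i))"
      using successively_nth[OF ys, of "j - i - 1"] \<open>\<not> j \<le> i\<close> assms(5)
      by (simp add: Suc_diff_Suc)
    ultimately show False using xs unfolding maximal_chain_def by (metis hd_conv_nth)
  }
  {
    assume "\<not> length ys - j \<le> length xs - i"
    define d where "d = length xs - 1 - i"
    have "xs ! (i + d) = ys ! (j + d)"
      by (rule chains_agree_forward[OF cx ys eq]) (use \<open>\<not> _ \<le> _\<close> assms(4) d_def in auto)
    moreover have "xs ! (i + d) = last xs"
      using assms(4) d_def last_conv_nth[of xs] by (cases "xs = []") auto
    moreover have "Q (ys ! (j + d)) (ys ! Suc (j + d))"
      by (rule successively_nth[OF ys]) (use \<open>\<not> _ \<le> _\<close> assms(4) d_def in auto)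
    ultimately show False using xs unfolding maximal_chain_def by metis
  }
qed

lemma maximal_chain_unique:
  assumes xs: "maximal_chain xs" and ys: "maximal_chain ys"
    and "i < length xs" "j < length ys" and eq: "xs ! i = ys ! j"
  shows "i = j \<and> xs = ys"
proof -
  have cx: "successively Q xs" and cy: "successively Q ys" using xs ys unfolding maximal_chain_def by auto
  have ij: "i = j" and len: "length xs = length ys"
    using maximal_chain_extends_furthest[OF xs cy eq] maximal_chain_extends_furthest[OF ys cx eq[symmetric]]
      assms(3,4) by auto
  have "xs ! k = ys ! k" if "k < length xs" for k
  proof (cases "i \<le> k")
    case True
    then show ?thesis using chains_agree_forward[OF cx cy eq, of "k - i"] ij that len by simp
  next
    case False
    then show ?thesis using chains_agree_backward[OF cx cy eq _ _, of "i - k"] ij that len assms(3,4) by simp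
  qed
  with ij len show ?thesis by (simp add: nth_equalityI)
qed

lemma distinct_if_no_successor:
  assumes c: "successively Q xs" and "xs \<noteq> []" and last: "\<forall>b. \<not> Q (last xs) b"
  shows "distinct xs"
proof (rule ccontr)
  assume "\<not> distinct xs"
  then obtain i j where ij: "i < j" "j < length xs" "xs ! i = xs ! j"
    by (metis distinct_conv_nth linorder_neqE_nat)
  define d where "d = length xs - 1 - j"
  have "xs ! (i + d) = xs ! (j + d)" by (rule chains_agree_forward[OF c c ij(3)]) (use ij d_def in auto)
  moreover have "j + d = length xs - 1" using ij d_def by simp
  then have "xs ! (j + d) = last xs" using last_conv_nth[OF \<open>xs \<noteq> []\<close>] by simp
  moreover have "Q (xs ! (i + d)) (xs ! Suc (i + d))" using successively_nth[OF c] ij d_def by simp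
  ultimately show False using last by metis
qed

lemma maximal_chain_through:
  assumes bound: "\<And>ys. successively Q ys \<Longrightarrow> a \<in> set ys \<Longrightarrow> length ys < N"
  shows "\<exists>xs. maximal_chain xs \<and> a \<in> set xs"
proof -
  let ?P = "\<lambda>ys. successively Q ys \<and> a \<in> set ys"
  obtain xs where xs: "?P xs" and longest: "\<And>ys. ?P ys \<Longrightarrow> length ys \<le> length xs"
    using ex_has_greatest_nat[of ?P "[a]" length N] bound by force
  then have "xs \<noteq> []" by auto
  moreover have "\<not> Q (last xs) b" for b
    using longest[of "xs @ [b]"] xs \<open>xs \<noteq> []\<close> by (auto simp: successively_append_iff)
  moreover have "\<not> Q b (hd xs)" for b
    using longest[of "b # xs"] xs \<open>xs \<noteq> []\<close> by (auto simp: successively_Cons)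
  ultimately show ?thesis using xs unfolding maximal_chain_def by blast
qed

end

section \<open>Forward orbits of an injective self-map of a finite set\<close>

locale finite_injection =
  fixes f :: "'a \<Rightarrow> 'a" and A :: "'a set"
  assumes finite_carrier: "finite A" and maps_to: "x \<in> A \<Longrightarrow> f x \<in> A" and inj: "inj_on f A"

begin

definition forward_orbit :: "'a \<Rightarrow> 'a set" where
  "forward_orbit x = range (\<lambda>n. (f ^^ n) x)"

definition period :: "'a \<Rightarrow> nat" where
  "period x = (LEAST n. 0 < n \<and> (f ^^ n) x = x)"

definition return_time :: "('a \<Rightarrow> bool) \<Rightarrow> 'a \<Rightarrow> nat" where
  "return_time P y = (LEAST n. 0 < n \<and> P ((f ^^ n) y))"

lemma funpow_in: "x \<in> A \<Longrightarrow> (f ^^ n) x \<in> A"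
  by (induction n) (auto intro: maps_to)

lemma funpow_cancel: "x \<in> A \<Longrightarrow> y \<in> A \<Longrightarrow> (f ^^ n) x = (f ^^ n) y \<Longrightarrow> x = y"
proof (induction n)
  case (Suc n)
  then show ?case using inj funpow_in unfolding inj_on_def by simp
qed simp

lemma funpow_diff_eq_self:
  assumes "x \<in> A" "a \<le> b" "(f ^^ a) x = (f ^^ b) x" shows "(f ^^ (b - a)) x = x"
proof -
  have "(f ^^ a) ((f ^^ (b - a)) x) = (f ^^ a) x"
    using assms(2,3) funpow_add[of a "b - a" f] by (simp add: comp_def)
  then show ?thesis using funpow_cancel funpow_in assms(1) by blast
qed

lemma ex_period: assumes x: "x \<in> A" shows "\<exists>n>0. (f ^^ n) x = x"
proof -
  have "\<not> inj_on (\<lambda>n. (f ^^ n) x) {..card A}"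
  proof
    assume "inj_on (\<lambda>n. (f ^^ n) x) {..card A}"
    moreover have "(\<lambda>n. (f ^^ n) x) ` {..card A} \<subseteq> A" using funpow_in x by auto
    ultimately have "card {..card A} \<le> card A" using card_inj_on_le finite_carrier by blast
    then show False by simp
  qed
  then obtain a b where "a \<noteq> b" "(f ^^ a) x = (f ^^ b) x" unfolding inj_on_def by blast
  then have "(f ^^ (max a b - min a b)) x = x" "0 < max a b - min a b"
    using funpow_diff_eq_self[OF x, of "min a b" "max a b"] by (auto simp: max_def min_def)
  then show ?thesis by blast
qed

lemma period: "x \<in> A \<Longrightarrow> 0 < period x \<and> (f ^^ period x) x = x"
  unfolding period_def by (rule LeastI_ex) (use ex_period in blast)

lemma funpow_ne_self_below_period: "0 < n \<Longrightarrow> n < period x \<Longrightarrow> (f ^^ n) x \<noteq> x"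
  unfolding period_def using not_less_Least by blast

lemma funpow_period_mult: "x \<in> A \<Longrightarrow> (f ^^ (period x * q)) x = x"
  by (induction q) (use period in \<open>simp_all add: funpow_add\<close>)

lemma funpow_mod_period: "x \<in> A \<Longrightarrow> (f ^^ n) x = (f ^^ (n mod period x)) x"
  using funpow_period_mult[of x "n div period x"] funpow_add[of "n mod period x" "period x * (n div period x)" f]
  by (simp add: comp_def)

lemma forward_orbit_eq_image: "x \<in> A \<Longrightarrow> forward_orbit x = (\<lambda>n. (f ^^ n) x) ` {..<period x}"
proof -
  assume x: "x \<in> A"
  have "(f ^^ n) x \<in> (\<lambda>n. (f ^^ n) x) ` {..<period x}" for n
    using funpow_mod_period[OF x, of n] period[OF x] by (intro image_eqI[of _ _ "n mod period x"]) auto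
  then show ?thesis unfolding forward_orbit_def by auto
qed

lemma inj_on_funpow_period: "x \<in> A \<Longrightarrow> inj_on (\<lambda>n. (f ^^ n) x) {..<period x}"
proof (rule inj_onI)
  fix a b assume x: "x \<in> A" and ab: "a \<in> {..<period x}" "b \<in> {..<period x}" "(f ^^ a) x = (f ^^ b) x"
  have no_collision: False if "a < b" "b < period x" "(f ^^ a) x = (f ^^ b) x" for a b
  proof -
    have "(f ^^ (b - a)) x = x" using funpow_diff_eq_self[OF x, of a b] that by simp
    moreover have "0 < b - a" "b - a < period x" using that by auto
    ultimately show False using funpow_ne_self_below_period by blast
  qed
  show "a = b"
  proof (rule linorder_cases[of a b])
    assume "a < b" then show ?thesis using no_collision[of a b] ab by simp
  next
    assume "b < a" then show ?thesis using no_collision[of b a] ab by simp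
  qed
qed

lemma card_forward_orbit: "x \<in> A \<Longrightarrow> card (forward_orbit x) = period x"
  using forward_orbit_eq_image card_image inj_on_funpow_period by fastforce

lemma forward_orbit_subset: "x \<in> A \<Longrightarrow> forward_orbit x \<subseteq> A"
  unfolding forward_orbit_def using funpow_in by auto

lemma finite_forward_orbit: "x \<in> A \<Longrightarrow> finite (forward_orbit x)"
  using forward_orbit_subset finite_carrier finite_subset by blast

lemma funpow_in_forward_orbit: "(f ^^ n) x \<in> forward_orbit x"
  unfolding forward_orbit_def by auto

lemma self_in_forward_orbit: "x \<in> forward_orbit x"
  using funpow_in_forward_orbit[of 0] by simp

lemma forward_orbit_eqI:
  assumes x: "x \<in> A" and y: "y \<in> forward_orbit x" shows "forward_orbit y = forward_orbit x"
proof -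
  obtain n where n: "y = (f ^^ n) x" using y unfolding forward_orbit_def by auto
  have "n \<le> period x * n" using period[OF x] by simp
  then have return: "(f ^^ (period x * n - n)) y = x"
    using n funpow_add[of "period x * n - n" n f] funpow_period_mult[OF x, of n] by (simp add: comp_def)
  have "(f ^^ k) y \<in> forward_orbit x" for k
    using n funpow_in_forward_orbit[of "k + n" x] by (simp add: funpow_add)
  moreover have "(f ^^ k) x \<in> forward_orbit y" for k
    using return funpow_in_forward_orbit[of "k + (period x * n - n)" y] by (simp add: funpow_add)
  ultimately show ?thesis unfolding forward_orbit_def by blast
qed

lemma image_forward_orbit: "x \<in> A \<Longrightarrow> f ` forward_orbit x = forward_orbit x"
proof (rule endo_inj_surj)
  assume x: "x \<in> A"
  show "finite (forward_orbit x)" using finite_forward_orbit[OF x] .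
  show "f ` forward_orbit x \<subseteq> forward_orbit x"
    unfolding forward_orbit_def using funpow_in_forward_orbit[of "Suc _"] by (auto simp: forward_orbit_def)
  show "inj_on f (forward_orbit x)" using inj forward_orbit_subset[OF x] inj_on_subset by blast
qed

lemma predecessor_in_forward_orbit:
  "x \<in> A \<Longrightarrow> (f ^^ (period x - 1)) x \<in> forward_orbit x \<and> f ((f ^^ (period x - 1)) x) = x"
  using period[of x] funpow_in_forward_orbit funpow_Suc_right[of "period x - 1" f]
  by (metis Suc_diff_1 comp_apply funpow.simps(2))

lemma return_time:
  assumes "0 < n" "P ((f ^^ n) y)"
  shows "0 < return_time P y \<and> P ((f ^^ return_time P y) y) \<and> return_time P y \<le> n"
proof -
  have *: "0 < n \<and> P ((f ^^ n) y)" using assms by simp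
  show ?thesis
    unfolding return_time_def
    using LeastI[where P = "\<lambda>k. 0 < k \<and> P ((f ^^ k) y)", OF *]
      Least_le[where P = "\<lambda>k. 0 < k \<and> P ((f ^^ k) y)", OF *] by simp
qed

lemma not_before_return_time: "0 < k \<Longrightarrow> k < return_time P y \<Longrightarrow> \<not> P ((f ^^ k) y)"
  unfolding return_time_def using not_less_Least by blast

lemma sum_return_time_from:
  assumes c: "c \<in> A" and "P c"
  shows "a < period c \<Longrightarrow> P ((f ^^ a) c) \<Longrightarrow>
    (\<Sum>n\<in>{n\<in>{a..<period c}. P ((f ^^ n) c)}. return_time P ((f ^^ n) c)) = period c - a"
proof (induction "period c - a" arbitrary: a rule: less_induct)
  case less
  let ?S = "\<lambda>a. {n\<in>{a..<period c}. P ((f ^^ n) c)}"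
  let ?r = "return_time P ((f ^^ a) c)"
  have "(f ^^ (period c - a)) ((f ^^ a) c) = c"
    using less.prems period[OF c] funpow_add[of "period c - a" a f] by (simp add: comp_def)
  then have r: "0 < ?r" "P ((f ^^ (a + ?r)) c)" "?r \<le> period c - a"
    using return_time[of "period c - a" P "(f ^^ a) c"] less.prems \<open>P c\<close> funpow_add[of ?r a f]
    by (auto simp: add.commute)
  have gap: "n \<notin> ?S a" if "a < n" "n < a + ?r" for n
    using not_before_return_time[of "n - a" P "(f ^^ a) c"] funpow_add[of "n - a" a f] that
    by (simp add: comp_def)
  have split: "?S a = insert a (?S (a + ?r))"
  proof (intro equalityI subsetI)
    fix n assume "n \<in> ?S a"
    then show "n \<in> insert a (?S (a + ?r))" using gap[of n] by (cases "a < n \<and> n < a + ?r") auto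
  next
    fix n assume "n \<in> insert a (?S (a + ?r))"
    then show "n \<in> ?S a" using less.prems by auto
  qed
  have "(\<Sum>n\<in>?S a. return_time P ((f ^^ n) c)) = ?r + (\<Sum>n\<in>?S (a + ?r). return_time P ((f ^^ n) c))"
    unfolding split using r(1) by (subst sum.insert) auto
  also have "\<dots> = period c - a"
  proof (cases "a + ?r < period c")
    case True
    then show ?thesis using less.hyps[of "a + ?r"] r by simp
  next
    case False
    then show ?thesis using r(3) by simp
  qed
  finally show ?case .
qed

lemma sum_return_time:
  assumes c: "c \<in> A" and "P c"
  shows "(\<Sum>y\<in>{y\<in>forward_orbit c. P y}. return_time P y) = card (forward_orbit c)"
proof -
  let ?g = "\<lambda>n. (f ^^ n) c"
  have "{y\<in>forward_orbit c. P y} = ?g ` {n\<in>{0..<period c}. P (?g n)}"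
    using forward_orbit_eq_image[OF c] by auto
  moreover have "inj_on ?g {n\<in>{0..<period c}. P (?g n)}"
    using inj_on_funpow_period[OF c] by (rule inj_on_subset) auto
  ultimately have "(\<Sum>y\<in>{y\<in>forward_orbit c. P y}. return_time P y)
      = (\<Sum>n\<in>{n\<in>{0..<period c}. P (?g n)}. return_time P (?g n))"
    by (simp add: sum.reindex)
  also have "\<dots> = period c" using sum_return_time_from[of c P 0] c period[OF c] assms(2) by simp
  finally show ?thesis using card_forward_orbit[OF c] by simp
qed

lemma iterate_reached_by_returns:
  assumes "x \<in> A" "P ((f ^^ n) x)"
  shows "\<exists>k. (f ^^ n) x = ((\<lambda>y. (f ^^ return_time P y) y) ^^ k) x"
  using assms
proof (induction n arbitrary: x rule: less_induct)
  case (less n)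
  let ?jump = "\<lambda>y. (f ^^ return_time P y) y"
  show ?case
  proof (cases "n = 0")
    case True
    then show ?thesis by (intro exI[of _ 0]) simp
  next
    case False
    let ?r = "return_time P x"
    have r: "0 < ?r" "?r \<le> n" using return_time[of n P x] less.prems False by auto
    have split: "(f ^^ n) x = (f ^^ (n - ?r)) (?jump x)"
      using r(2) funpow_add[of "n - ?r" ?r f] by (simp add: comp_def)
    have "?jump x \<in> A" using funpow_in less.prems(1) by blast
    moreover have "P ((f ^^ (n - ?r)) (?jump x))" using split less.prems(2) by simp
    ultimately obtain k where "(f ^^ (n - ?r)) (?jump x) = (?jump ^^ k) (?jump x)"
      using less.IH[of "n - ?r"] r(1) False by auto
    then have "(f ^^ n) x = (?jump ^^ Suc k) x" unfolding split funpow_Suc_right comp_apply .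
    then show ?thesis by blast
  qed
qed

end

section \<open>Maximal paths of a gentle quiver\<close>

locale gentle_quiver =
  fixes V :: "'v set" and E :: "'a set" and s t :: "'a \<Rightarrow> 'v" and R :: "('a \<times> 'a) set"
  assumes gentle: "gentle V E s t R" and connected: "connected_quiver V E s t"
    and arrows_nonempty: "E \<noteq> {}"

begin

lemma finite_V: "finite V" and finite_E: "finite E"
  and source_in_V: "a \<in> E \<Longrightarrow> s a \<in> V" and target_in_V: "a \<in> E \<Longrightarrow> t a \<in> V"
  using gentle unfolding gentle_def by auto

lemma relation_arrows: "(a, b) \<in> R \<Longrightarrow> a \<in> E \<and> b \<in> E \<and> t a = s b"
  using gentle unfolding gentle_def by auto

lemma degrees_le_2: "v \<in> V \<Longrightarrow> card {a\<in>E. s a = v} \<le> 2 \<and> card {a\<in>E. t a = v} \<le> 2"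
  using gentle unfolding gentle_def outdeg_def indeg_def by auto

lemma admissible: "\<exists>N. \<forall>as. set as \<subseteq> E \<longrightarrow> composable s t as \<longrightarrow> N \<le> length as \<longrightarrow> \<not> nonrel R as"
  using gentle unfolding gentle_def by blast

lemma no_isolated_vertex:
  assumes "v \<in> V" shows "\<exists>a\<in>E. s a = v \<or> t a = v"
proof -
  obtain a where a: "a \<in> E" using arrows_nonempty by auto
  let ?G = "{(s \<alpha>, t \<alpha>) | \<alpha>. \<alpha> \<in> E} \<union> {(t \<alpha>, s \<alpha>) | \<alpha>. \<alpha> \<in> E}"
  have "(v, s a) \<in> ?G\<^sup>*" using connected assms source_in_V[OF a] unfolding connected_quiver_def by blast
  then show ?thesis by (cases rule: converse_rtranclE) (use a in auto)
qed

text \<open>The arrow lists of the paths in \<open>\<M>\<close> are the maximal chains of \<open>nonrel_succ\<close>, those of the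
  paths in \<open>\<F>\<close> the maximal chains of \<open>R\<close> (\<open>max_paths_iff\<close>, \<open>F_paths_iff\<close>).\<close>

definition nonrel_succ :: "'a \<Rightarrow> 'a \<Rightarrow> bool" where
  "nonrel_succ a b \<longleftrightarrow> a \<in> E \<and> b \<in> E \<and> t a = s b \<and> (a, b) \<notin> R"

sublocale M: partial_bijection nonrel_succ
proof
  have card: "card {b\<in>E. s b = t a \<and> (a, b) \<notin> R} \<le> 1" "card {c\<in>E. t c = s a \<and> (c, a) \<notin> R} \<le> 1"
    if "a \<in> E" for a
    using gentle that unfolding gentle_def by blast+
  show "b = b'" if "nonrel_succ a b" "nonrel_succ a b'" for a b b'
    by (rule card_le_1_eq[OF _ card(1)[of a]]) (use that finite_E in \<open>auto simp: nonrel_succ_def\<close>)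
  show "a = a'" if "nonrel_succ a b" "nonrel_succ a' b" for a a' b
    by (rule card_le_1_eq[OF _ card(2)[of b]]) (use that finite_E in \<open>auto simp: nonrel_succ_def\<close>)
qed

sublocale F: partial_bijection "\<lambda>a b. (a, b) \<in> R"
proof
  have card: "card {b\<in>E. (a, b) \<in> R} \<le> 1" "card {c\<in>E. (c, a) \<in> R} \<le> 1" if "a \<in> E" for a
    using gentle that unfolding gentle_def by blast+
  show "b = b'" if "(a, b) \<in> R" "(a, b') \<in> R" for a b b'
    by (rule card_le_1_eq[OF _ card(1)[of a]]) (use that finite_E relation_arrows in auto)
  show "a = a'" if "(a, b) \<in> R" "(a', b) \<in> R" for a a' b
    by (rule card_le_1_eq[OF _ card(2)[of b]]) (use that finite_E relation_arrows in auto)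
qed

abbreviation "MP \<equiv> max_paths V E s t R"

abbreviation "FP \<equiv> F_paths V E s t R"

abbreviation "MB \<equiv> Mbar V E s t R"

lemma maximal_path_iff_chain:
  assumes Q: "\<And>a b. Q a b \<Longrightarrow> a \<in> E \<and> b \<in> E \<and> t a = s b"
    and C: "\<And>xs. set xs \<subseteq> E \<Longrightarrow> composable s t xs \<Longrightarrow> C xs \<longleftrightarrow> successively Q xs"
  shows "is_path V E s t (v, xs) \<and> xs \<noteq> [] \<and> C xs
           \<and> \<not> (\<exists>\<alpha>\<in>E. s \<alpha> = ptgt t (v, xs) \<and> C (xs @ [\<alpha>]))
           \<and> \<not> (\<exists>\<alpha>\<in>E. t \<alpha> = v \<and> C (\<alpha> # xs))
     \<longleftrightarrow> xs \<noteq> [] \<and> successively Q xs \<and> (\<forall>b. \<not> Q (last xs) b) \<and> (\<forall>a. \<not> Q a (hd xs))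
           \<and> set xs \<subseteq> E \<and> v = s (hd xs)"
    (is "?path \<longleftrightarrow> ?chain")
proof (cases "xs = []")
  case False
  have comp: "successively Q ys \<Longrightarrow> composable s t ys" for ys
    unfolding composable_iff_successively using Q by (auto elim: successively_mono)
  have snoc: "(b \<in> E \<and> s b = t (last xs) \<and> C (xs @ [b])) \<longleftrightarrow> Q (last xs) b"
    if "set xs \<subseteq> E" "successively Q xs" for b
    using C[of "xs @ [b]"] Q[of "last xs" b] that False comp[of xs]
    by (auto simp: composable_iff_successively successively_append_iff)
  have cons: "(a \<in> E \<and> t a = s (hd xs) \<and> C (a # xs)) \<longleftrightarrow> Q a (hd xs)"
    if "set xs \<subseteq> E" "successively Q xs" for a
    using C[of "a # xs"] Q[of a "hd xs"] that False comp[of xs]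
    by (auto simp: composable_iff_successively successively_Cons)
  show ?thesis
  proof
    assume ?path
    then have xs: "set xs \<subseteq> E" "v = s (hd xs)" "successively Q xs"
      using False C[of xs] unfolding is_path_def by auto
    with \<open>?path\<close> show ?chain using False snoc[OF xs(1,3)] cons[OF xs(1,3)] unfolding ptgt_def
      by (simp; blast)
  next
    assume ?chain
    then have "set xs \<subseteq> E" "v = s (hd xs)" "successively Q xs" by auto
    moreover have "v \<in> V" using calculation False source_in_V hd_in_set by auto
    ultimately show ?path
      using \<open>?chain\<close> False C[of xs] comp[of xs] snoc cons unfolding is_path_def ptgt_def by auto
  qed
qed simp

lemma trivial_path_not_max_path: "(v, []) \<notin> MP"
proof
  assume v: "(v, []) \<in> MP"
  then have "v \<in> V" unfolding max_paths_def is_path_def by auto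
  then obtain a where "a \<in> E" "s a = v \<or> t a = v" using no_isolated_vertex by blast
  with v show False unfolding max_paths_def ptgt_def nonrel_def by auto
qed

lemma nonrel_iff_successively:
  "set xs \<subseteq> E \<Longrightarrow> composable s t xs \<Longrightarrow> nonrel R xs \<longleftrightarrow> successively nonrel_succ xs"
  unfolding nonrel_def nonrel_succ_def composable_def successively_conv_nth by auto

lemma successively_nonrel_succ_D:
  "successively nonrel_succ xs \<Longrightarrow> composable s t xs \<and> nonrel R xs"
  unfolding nonrel_def nonrel_succ_def composable_def successively_conv_nth by auto

lemma max_paths_iff:
  "p \<in> MP \<longleftrightarrow> snd p \<noteq> [] \<and> M.maximal_chain (snd p) \<and> set (snd p) \<subseteq> E \<and> fst p = s (hd (snd p))"
proof -
  obtain v xs where p: "p = (v, xs)" by fastforce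
  show ?thesis
  proof (cases "xs = []")
    case True
    then show ?thesis using trivial_path_not_max_path p by simp
  next
    case False
    then have "p \<in> MP \<longleftrightarrow> is_path V E s t (v, xs) \<and> xs \<noteq> [] \<and> nonrel R xs
           \<and> \<not> (\<exists>\<alpha>\<in>E. s \<alpha> = ptgt t (v, xs) \<and> nonrel R (xs @ [\<alpha>]))
           \<and> \<not> (\<exists>\<alpha>\<in>E. t \<alpha> = v \<and> nonrel R (\<alpha> # xs))"
      unfolding p max_paths_def by simp
    also have "\<dots> \<longleftrightarrow> xs \<noteq> [] \<and> successively nonrel_succ xs \<and> (\<forall>b. \<not> nonrel_succ (last xs) b)
        \<and> (\<forall>a. \<not> nonrel_succ a (hd xs)) \<and> set xs \<subseteq> E \<and> v = s (hd xs)"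
      by (rule maximal_path_iff_chain[OF _ nonrel_iff_successively]) (simp add: nonrel_succ_def)
    finally show ?thesis unfolding p M.maximal_chain_def by auto
  qed
qed

lemma F_paths_iff:
  "f \<in> FP \<longleftrightarrow> snd f \<noteq> [] \<and> F.maximal_chain (snd f) \<and> set (snd f) \<subseteq> E \<and> fst f = s (hd (snd f))"
proof -
  obtain v xs where f: "f = (v, xs)" by fastforce
  have "f \<in> FP \<longleftrightarrow> is_path V E s t (v, xs) \<and> xs \<noteq> [] \<and> allrel R xs
           \<and> \<not> (\<exists>\<alpha>\<in>E. s \<alpha> = ptgt t (v, xs) \<and> allrel R (xs @ [\<alpha>]))
           \<and> \<not> (\<exists>\<alpha>\<in>E. t \<alpha> = v \<and> allrel R (\<alpha> # xs))"
    unfolding f F_paths_def by simp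
  also have "\<dots> \<longleftrightarrow> xs \<noteq> [] \<and> allrel R xs \<and> (\<forall>b. (last xs, b) \<notin> R)
        \<and> (\<forall>a. (a, hd xs) \<notin> R) \<and> set xs \<subseteq> E \<and> v = s (hd xs)"
    unfolding allrel_iff_successively
    by (rule maximal_path_iff_chain) (use relation_arrows in auto)
  finally show ?thesis unfolding f F.maximal_chain_def allrel_iff_successively by auto
qed

lemma maximal_M_chain_through:
  assumes "a \<in> E" shows "\<exists>xs. M.maximal_chain xs \<and> set xs \<subseteq> E \<and> a \<in> set xs"
proof -
  have in_E: "set ys \<subseteq> E" if "successively nonrel_succ ys" "a \<in> set ys" for ys
    by (rule successively_set_subset[OF _ that(1)]) (use that(2) assms in \<open>auto simp: nonrel_succ_def\<close>)
  obtain N where N: "\<And>ys. set ys \<subseteq> E \<Longrightarrow> composable s t ys \<Longrightarrow> N \<le> length ys \<Longrightarrow> \<not> nonrel R ys"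
    using admissible by blast
  have "length ys < N" if "successively nonrel_succ ys" "a \<in> set ys" for ys
    using N[OF in_E[OF that]] successively_nonrel_succ_D[OF that(1)] by fastforce
  then obtain xs where "M.maximal_chain xs" "a \<in> set xs" using M.maximal_chain_through by blast
  then show ?thesis using in_E unfolding M.maximal_chain_def by blast
qed

lemma maximal_F_chain_ending:
  assumes a: "a \<in> E" and no_succ: "\<forall>b. (a, b) \<notin> R"
  shows "\<exists>xs. F.maximal_chain xs \<and> set xs \<subseteq> E \<and> last xs = a"
proof -
  have in_E: "set ys \<subseteq> E" if "successively (\<lambda>a b. (a, b) \<in> R) ys" "a \<in> set ys" for ys
    by (rule successively_set_subset[OF _ that(1)]) (use that(2) a relation_arrows in auto)
  have bound: "length ys < card E + 1" if "successively (\<lambda>a b. (a, b) \<in> R) ys" "a \<in> set ys" for ys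
  proof -
    have "ys \<noteq> []" using that(2) by auto
    moreover have "last ys = a" using last_if_no_successor[OF that] no_succ by simp
    ultimately have "distinct ys" using F.distinct_if_no_successor[OF that(1)] no_succ by simp
    then show ?thesis using card_mono[OF finite_E in_E[OF that]] by (simp add: distinct_card)
  qed
  obtain xs where xs: "F.maximal_chain xs" "a \<in> set xs" using F.maximal_chain_through[OF bound] by blast
  then have "successively (\<lambda>a b. (a, b) \<in> R) xs" unfolding F.maximal_chain_def by simp
  then have "set xs \<subseteq> E" "last xs = a" using xs(2) in_E last_if_no_successor no_succ by auto
  then show ?thesis using xs(1) by blast
qed

lemma Mbar_cases: "m \<in> MB \<Longrightarrow> (m \<in> MP \<and> snd m \<noteq> []) \<or> (snd m = [] \<and> m \<in> M0 V E s t R \<and> m \<notin> MP)"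
  unfolding Mbar_def using max_paths_iff by (auto simp: M0_def)

lemma Mbar_nontrivial:
  "m \<in> MB \<Longrightarrow> snd m \<noteq> [] \<Longrightarrow> M.maximal_chain (snd m) \<and> set (snd m) \<subseteq> E \<and> fst m = s (hd (snd m))"
  using Mbar_cases max_paths_iff by blast

lemma Mbar_position_unique:
  assumes "m \<in> MB" "m' \<in> MB" "i < length (snd m)" "j < length (snd m')" "snd m ! i = snd m' ! j"
  shows "m = m' \<and> i = j"
proof -
  have "snd m \<noteq> []" "snd m' \<noteq> []" using assms(3,4) by auto
  with assms have "snd m = snd m' \<and> i = j" "fst m = s (hd (snd m))" "fst m' = s (hd (snd m'))"
    using M.maximal_chain_unique Mbar_nontrivial by metis+
  then show ?thesis by (simp add: prod_eq_iff)
qed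

section \<open>Half-edges and the partner involution\<close>

abbreviation "HE \<equiv> half_edges V E s t R"

abbreviation "lab \<equiv> he_label t"

definition in_arrow :: "('v, 'a) qpath \<times> nat \<Rightarrow> 'a option" where
  "in_arrow h = (if snd h = 0 then None else Some (snd (fst h) ! (snd h - 1)))"

definition out_arrow :: "('v, 'a) qpath \<times> nat \<Rightarrow> 'a option" where
  "out_arrow h = (if snd h < length (snd (fst h)) then Some (snd (fst h) ! snd h) else None)"

lemma label_in_V:
  assumes "h \<in> HE" shows "lab h \<in> V"
proof -
  obtain m p where h: "h = (m, p)" by fastforce
  then have h: "h = (m, p)" "m \<in> MB" "p \<le> length (snd m)" using assms unfolding half_edges_def by auto
  show ?thesis
  proof (cases "snd m = []")
    case True then show ?thesis using Mbar_cases[OF h(2)] h by (cases m) (auto simp: M0_def he_label_def)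
  next
    case False
    then have "set (snd m) \<subseteq> E" "fst m = s (hd (snd m))" using Mbar_nontrivial h(2) by auto
    then have "hd (snd m) \<in> E" "0 < p \<Longrightarrow> snd m ! (p - 1) \<in> E" using h(3) False by auto
    then show ?thesis using h \<open>fst m = _\<close> source_in_V target_in_V unfolding he_label_def by auto
  qed
qed

lemma out_arrow_SomeD:
  assumes "h \<in> HE" "out_arrow h = Some b"
  shows "fst h \<in> MB \<and> snd h < length (snd (fst h)) \<and> snd (fst h) ! snd h = b \<and> b \<in> E"
proof -
  have *: "fst h \<in> MB" "snd h < length (snd (fst h))" "snd (fst h) ! snd h = b"
    using assms unfolding out_arrow_def half_edges_def by (auto split: if_splits)
  then have "snd (fst h) \<noteq> []" by auto
  then have "set (snd (fst h)) \<subseteq> E" using Mbar_nontrivial[OF *(1)] by blast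
  with * show ?thesis by (auto dest: nth_mem)
qed

lemma in_arrow_SomeD:
  assumes "h \<in> HE" "in_arrow h = Some a"
  shows "fst h \<in> MB \<and> 0 < snd h \<and> snd h \<le> length (snd (fst h)) \<and> snd (fst h) ! (snd h - 1) = a \<and> a \<in> E"
proof -
  have *: "fst h \<in> MB" "0 < snd h" "snd h \<le> length (snd (fst h))" "snd (fst h) ! (snd h - 1) = a"
    using assms unfolding in_arrow_def half_edges_def by (auto split: if_splits)
  then have "snd (fst h) \<noteq> []" by auto
  then have "set (snd (fst h)) \<subseteq> E" using Mbar_nontrivial[OF *(1)] by blast
  with * show ?thesis by (auto dest: nth_mem)
qed

lemma out_arrow_unique: "h \<in> HE \<Longrightarrow> h' \<in> HE \<Longrightarrow> out_arrow h = Some a \<Longrightarrow> out_arrow h' = Some a \<Longrightarrow> h = h'"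
  using Mbar_position_unique out_arrow_SomeD by (metis prod.collapse)

lemma in_arrow_unique: "h \<in> HE \<Longrightarrow> h' \<in> HE \<Longrightarrow> in_arrow h = Some a \<Longrightarrow> in_arrow h' = Some a \<Longrightarrow> h = h'"
proof -
  assume h: "h \<in> HE" "h' \<in> HE" "in_arrow h = Some a" "in_arrow h' = Some a"
  note D = in_arrow_SomeD[OF h(1,3)] in_arrow_SomeD[OF h(2,4)]
  have "fst h = fst h' \<and> snd h - 1 = snd h' - 1"
    by (rule Mbar_position_unique) (use D in auto)
  then show "h = h'" using D by (auto simp: prod_eq_iff)
qed

lemma arrow_has_out_and_in_half_edge:
  assumes "a \<in> E" shows "\<exists>h\<in>HE. out_arrow h = Some a" "\<exists>h\<in>HE. in_arrow h = Some a"
proof -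
  obtain xs i where xs: "M.maximal_chain xs" "set xs \<subseteq> E" "i < length xs" "xs ! i = a"
    using maximal_M_chain_through[OF assms] by (metis in_set_conv_nth)
  then have "(s (hd xs), xs) \<in> MB" using max_paths_iff unfolding Mbar_def M.maximal_chain_def by auto
  then have "((s (hd xs), xs), i) \<in> HE" "((s (hd xs), xs), Suc i) \<in> HE"
    using xs unfolding half_edges_def by auto
  then show "\<exists>h\<in>HE. out_arrow h = Some a" "\<exists>h\<in>HE. in_arrow h = Some a"
    using xs unfolding out_arrow_def in_arrow_def by force+
qed

definition out_he :: "'a \<Rightarrow> ('v, 'a) qpath \<times> nat" where
  "out_he a = (THE h. h \<in> HE \<and> out_arrow h = Some a)"

definition in_he :: "'a \<Rightarrow> ('v, 'a) qpath \<times> nat" where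
  "in_he a = (THE h. h \<in> HE \<and> in_arrow h = Some a)"

lemma out_he: "a \<in> E \<Longrightarrow> out_he a \<in> HE \<and> out_arrow (out_he a) = Some a"
  unfolding out_he_def by (rule theI') (use arrow_has_out_and_in_half_edge out_arrow_unique in blast)

lemma in_he: "a \<in> E \<Longrightarrow> in_he a \<in> HE \<and> in_arrow (in_he a) = Some a"
  unfolding in_he_def by (rule theI') (use arrow_has_out_and_in_half_edge in_arrow_unique in blast)

lemma out_he_eq: "h \<in> HE \<Longrightarrow> out_arrow h = Some a \<Longrightarrow> h = out_he a"
  using out_he out_arrow_unique out_arrow_SomeD by blast

lemma in_he_eq: "h \<in> HE \<Longrightarrow> in_arrow h = Some a \<Longrightarrow> h = in_he a"
  using in_he in_arrow_unique in_arrow_SomeD by blast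

lemma inj_on_out_he: "inj_on out_he E"
  by (rule inj_onI) (metis out_he option.inject)

lemma inj_on_in_he: "inj_on in_he E"
  by (rule inj_onI) (metis in_he option.inject)

lemma he_next_in_HE: "h \<in> HE \<Longrightarrow> he_next h \<in> HE"
  unfolding he_next_def half_edges_def by auto

lemma inj_he_next: "inj he_next"
  unfolding inj_def he_next_def by (auto split: if_splits)

lemma marked_iff_no_out_arrow: "h \<in> HE \<Longrightarrow> he_marked h \<longleftrightarrow> out_arrow h = None"
  unfolding he_marked_def out_arrow_def half_edges_def by auto

lemma he_next_out_he: "a \<in> E \<Longrightarrow> he_next (out_he a) = in_he a"
  using out_he[of a] out_arrow_SomeD[of "out_he a" a]
  by (intro in_he_eq) (auto simp: he_next_def half_edges_def in_arrow_def)

lemma label_in_he: "a \<in> E \<Longrightarrow> lab (in_he a) = t a"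
  using in_he[of a] unfolding he_label_def in_arrow_def by (auto split: if_splits)

lemma in_out_nonrel_succ:
  assumes "h \<in> HE" "in_arrow h = Some a" "out_arrow h = Some b" shows "nonrel_succ a b"
proof -
  let ?xs = "snd (fst h)" and ?p = "snd h"
  have "M.maximal_chain ?xs" using assms Mbar_nontrivial out_arrow_SomeD by fastforce
  moreover have "0 < ?p" "?xs ! (?p - 1) = a" "?p < length ?xs" "?xs ! ?p = b"
    using in_arrow_SomeD[OF assms(1,2)] out_arrow_SomeD[OF assms(1,3)] by auto
  ultimately show ?thesis
    using successively_nth[of nonrel_succ ?xs "?p - 1"] unfolding M.maximal_chain_def by simp
qed

lemma label_out_he: "a \<in> E \<Longrightarrow> lab (out_he a) = s a"
proof -
  assume a: "a \<in> E"
  let ?h = "out_he a"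
  show ?thesis
  proof (cases "in_arrow ?h")
    case None
    then show ?thesis
      using out_he[OF a] out_arrow_SomeD[of ?h a] Mbar_nontrivial[of "fst ?h"]
      unfolding in_arrow_def he_label_def by (auto split: if_splits simp: hd_conv_nth)
  next
    case (Some c)
    then have "nonrel_succ c a" using in_out_nonrel_succ out_he[OF a] by blast
    then show ?thesis
      using Some out_he[OF a] in_he_eq label_in_he unfolding nonrel_succ_def
      by (metis he_label_def in_arrow_def option.distinct(1))
  qed
qed

lemma out_without_in_not_nonrel_succ:
  assumes "h \<in> HE" "out_arrow h = Some b" "in_arrow h = None" shows "\<not> nonrel_succ a b"
proof -
  have "snd h = 0" using assms(3) unfolding in_arrow_def by (auto split: if_splits)
  then have "hd (snd (fst h)) = b" "snd (fst h) \<noteq> []"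
    using out_arrow_SomeD[OF assms(1,2)] by (auto simp: hd_conv_nth)
  then show ?thesis
    using out_arrow_SomeD[OF assms(1,2)] Mbar_nontrivial[of "fst h"] unfolding M.maximal_chain_def by auto
qed

lemma no_arrows_trivial_corner:
  assumes "h \<in> HE" "in_arrow h = None" "out_arrow h = None"
  shows "h = ((lab h, []), 0) \<and> (lab h, []) \<in> M0 V E s t R"
proof -
  obtain v xs p where h: "h = ((v, xs), p)" by (metis prod.collapse)
  then have "p = 0" "xs = []" using assms unfolding in_arrow_def out_arrow_def by (auto split: if_splits)
  moreover have "(v, xs) \<in> MB" using assms(1) h unfolding half_edges_def by auto
  ultimately show ?thesis using Mbar_cases[of "(v, xs)"] h unfolding he_label_def by auto
qed

lemma nonrel_succ_in_he_eq_out_he: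
  assumes "nonrel_succ a b" shows "in_he a = out_he b"
proof -
  have "a \<in> E" "b \<in> E" using assms unfolding nonrel_succ_def by auto
  then have o: "out_he b \<in> HE" "out_arrow (out_he b) = Some b" using out_he by auto
  then obtain c where c: "in_arrow (out_he b) = Some c"
    using out_without_in_not_nonrel_succ assms by fastforce
  then have "c = a" using in_out_nonrel_succ[OF o(1) c o(2)] M.pred_unique assms by blast
  then show ?thesis using in_he_eq o c by simp
qed

definition half_edges_at :: "'v \<Rightarrow> (('v, 'a) qpath \<times> nat) set" where
  "half_edges_at v = {h \<in> HE. lab h = v}"

definition initial_arrows :: "'v \<Rightarrow> 'a set" where
  "initial_arrows v = {b\<in>E. s b = v \<and> (\<forall>a\<in>E. t a = v \<longrightarrow> (a, b) \<in> R)}"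

definition trivial_corners :: "'v \<Rightarrow> (('v, 'a) qpath \<times> nat) set" where
  "trivial_corners v = {h. h = ((v, []), 0) \<and> (v, []) \<in> M0 V E s t R}"

lemma half_edges_at_split:
  "half_edges_at v = in_he ` {a\<in>E. t a = v} \<union> out_he ` initial_arrows v \<union> trivial_corners v"
proof (intro equalityI subsetI)
  fix h assume "h \<in> half_edges_at v"
  then have h: "h \<in> HE" "lab h = v" unfolding half_edges_at_def by auto
  consider a where "in_arrow h = Some a" | b where "in_arrow h = None" "out_arrow h = Some b"
    | "in_arrow h = None" "out_arrow h = None" by (cases "in_arrow h"; cases "out_arrow h") auto
  then show "h \<in> in_he ` {a\<in>E. t a = v} \<union> out_he ` initial_arrows v \<union> trivial_corners v"
  proof cases
    case (1 a)
    then have "a \<in> E" "h = in_he a" using in_arrow_SomeD in_he_eq h by blast+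
    then show ?thesis using label_in_he h by auto
  next
    case (2 b)
    then have b: "b \<in> E" "h = out_he b" using out_arrow_SomeD out_he_eq h by blast+
    then have "s b = v" using label_out_he h by auto
    then have "b \<in> initial_arrows v"
      using out_without_in_not_nonrel_succ[OF h(1) 2(2,1)] b unfolding initial_arrows_def nonrel_succ_def
      by auto
    then show ?thesis using b by auto
  next
    case 3
    then show ?thesis using no_arrows_trivial_corner[OF h(1)] h unfolding trivial_corners_def by auto
  qed
next
  have "((v, []), 0) \<in> HE" if "(v, []) \<in> M0 V E s t R"
    using that unfolding half_edges_def Mbar_def by auto
  moreover have "lab ((v, []), 0) = v" unfolding he_label_def by simp
  moreover fix h assume "h \<in> in_he ` {a\<in>E. t a = v} \<union> out_he ` initial_arrows v \<union> trivial_corners v"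
  ultimately show "h \<in> half_edges_at v"
    using in_he label_in_he out_he label_out_he
    unfolding half_edges_at_def initial_arrows_def trivial_corners_def by auto
qed

lemma card_half_edges_at:
  "card (half_edges_at v)
     = card {a\<in>E. t a = v} + card (initial_arrows v) + (if (v, []) \<in> M0 V E s t R then 1 else 0)"
proof -
  let ?A = "{a\<in>E. t a = v}" and ?B = "initial_arrows v" and ?T = "trivial_corners v"
  have fin: "finite ?A" "finite ?B" "finite ?T"
    using finite_E unfolding initial_arrows_def trivial_corners_def by auto
  have inj: "inj_on in_he ?A" "inj_on out_he ?B"
    by (auto intro!: inj_onI simp: initial_arrows_def) (metis in_he option.inject, metis out_he option.inject)
  have in_ne_out: "in_he a \<noteq> out_he b" if "a \<in> ?A" "b \<in> ?B" for a b
  proof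
    assume "in_he a = out_he b"
    then have "nonrel_succ a b" using in_out_nonrel_succ in_he out_he that unfolding initial_arrows_def
      by (metis (no_types, lifting) mem_Collect_eq)
    then show False using that unfolding nonrel_succ_def initial_arrows_def by auto
  qed
  have "in_arrow h = None" "out_arrow h = None" if "h \<in> ?T" for h
    using that by (auto simp: in_arrow_def out_arrow_def trivial_corners_def)
  then have "in_he a \<notin> ?T" "out_he a \<notin> ?T" if "a \<in> E" for a
    using in_he[OF that] out_he[OF that] by (metis option.distinct(1))+
  then have "(in_he ` ?A \<union> out_he ` ?B) \<inter> ?T = {}"
    unfolding initial_arrows_def by blast
  then have "card (half_edges_at v) = card (in_he ` ?A \<union> out_he ` ?B) + card ?T"
    unfolding half_edges_at_split by (rule card_Un_disjoint[rotated 2]) (use fin in auto)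
  also have "card (in_he ` ?A \<union> out_he ` ?B) = card ?A + card ?B"
    using card_Un_disjoint[of "in_he ` ?A" "out_he ` ?B"] fin in_ne_out card_image[OF inj(1)] card_image[OF inj(2)]
    by auto
  also have "card ?T = (if (v, []) \<in> M0 V E s t R then 1 else 0)"
    unfolding trivial_corners_def by auto
  finally show ?thesis .
qed

lemma trivial_path_in_M0_iff:
  "v \<in> V \<Longrightarrow> (v, []) \<in> M0 V E s t R \<longleftrightarrow> card {a\<in>E. t a = v} + card {b\<in>E. s b = v} = 1
      \<or> (card {a\<in>E. t a = v} = 1 \<and> card {b\<in>E. s b = v} = 1
         \<and> (\<forall>a\<in>{a\<in>E. t a = v}. \<forall>b\<in>{b\<in>E. s b = v}. (a, b) \<notin> R))"
  unfolding M0_def indeg_def outdeg_def by auto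

lemma card_half_edges_at_single_in_arrow:
  assumes v: "v \<in> V" and In: "{a\<in>E. t a = v} = {a}"
  shows "card (initial_arrows v) + (if (v, []) \<in> M0 V E s t R then 1 else 0) = 1"
proof -
  let ?Out = "{b\<in>E. s b = v}"
  have a: "a \<in> E" "t a = v" using In by auto
  have init: "initial_arrows v = {b\<in>?Out. (a, b) \<in> R}" using In unfolding initial_arrows_def by auto
  note M0_iff = trivial_path_in_M0_iff[OF v, unfolded In]
  have "finite ?Out" "card ?Out \<le> 2" using finite_E degrees_le_2[OF v] by auto
  then show ?thesis
  proof (cases ?Out rule: finite_set_card_le_2_cases)
    case 1
    have "initial_arrows v = {}" using init 1 by blast
    moreover have "card ?Out = 0" by (simp only: 1 card.empty)
    ultimately show ?thesis using M0_iff by simp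
  next
    case (2 b)
    then have "initial_arrows v = (if (a, b) \<in> R then {b} else {})" using init by auto
    then show ?thesis using M0_iff 2 by auto
  next
    case (3 b1 b2)
    then have b: "b1 \<in> E" "s b1 = v" "b2 \<in> E" "s b2 = v" by blast+
    have "\<not> ((a, b1) \<in> R \<and> (a, b2) \<in> R)" using F.succ_unique 3 by blast
    moreover have "\<not> (nonrel_succ a b1 \<and> nonrel_succ a b2)" using M.succ_unique 3 by blast
    ultimately have "initial_arrows v = {b1} \<or> initial_arrows v = {b2}"
      using init 3 a b unfolding nonrel_succ_def by auto
    then show ?thesis using M0_iff 3 by auto
  qed
qed

lemma card_half_edges_at_eq_2:
  assumes v: "v \<in> V" shows "card (half_edges_at v) = 2"
proof -
  let ?In = "{a\<in>E. t a = v}" and ?Out = "{b\<in>E. s b = v}"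
  note card_eq = card_half_edges_at[of v] and M0_iff = trivial_path_in_M0_iff[OF v]
  have "finite ?In" "card ?In \<le> 2" using finite_E degrees_le_2[OF v] by auto
  then show ?thesis
  proof (cases ?In rule: finite_set_card_le_2_cases)
    case 1
    then have "initial_arrows v = ?Out" unfolding initial_arrows_def by auto
    moreover have "?Out \<noteq> {}" using no_isolated_vertex[OF v] 1 by auto
    then have "card ?Out \<noteq> 0" using finite_E by simp
    then have "card ?Out = 1 \<or> card ?Out = 2" using degrees_le_2[OF v] by linarith
    ultimately show ?thesis using card_eq M0_iff 1 by auto
  next
    case (2 a)
    then show ?thesis using card_eq card_half_edges_at_single_in_arrow[OF v] by simp
  next
    case (3 a1 a2)
    then have "initial_arrows v = {}" using F.pred_unique unfolding initial_arrows_def by blast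
    then show ?thesis using card_eq M0_iff 3 by simp
  qed
qed

abbreviation "partner \<equiv> he_partner V E s t R"

lemma partner_unique_ex: "h \<in> HE \<Longrightarrow> \<exists>!h'. h' \<in> HE \<and> h' \<noteq> h \<and> lab h' = lab h"
proof -
  assume h: "h \<in> HE"
  obtain x y where xy: "x \<noteq> y" "half_edges_at (lab h) = {x, y}"
    using card_half_edges_at_eq_2[OF label_in_V[OF h]] unfolding card_2_iff by blast
  then have mem: "h' \<in> HE \<and> lab h' = lab h \<longleftrightarrow> h' = x \<or> h' = y" for h'
    unfolding half_edges_at_def by blast
  then consider "h = x" | "h = y" using h by blast
  then show ?thesis
  proof cases
    case 1
    show ?thesis by (rule ex1I[of _ y]) (use mem 1 xy(1) in blast)+
  next
    case 2
    show ?thesis by (rule ex1I[of _ x]) (use mem 2 xy(1) in blast)+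
  qed
qed

lemma partner: "h \<in> HE \<Longrightarrow> partner h \<in> HE \<and> partner h \<noteq> h \<and> lab (partner h) = lab h"
  unfolding he_partner_def by (rule someI_ex) (use partner_unique_ex in blast)

lemma partner_eqI: "h \<in> HE \<Longrightarrow> h' \<in> HE \<Longrightarrow> h' \<noteq> h \<Longrightarrow> lab h' = lab h \<Longrightarrow> h' = partner h"
  using partner_unique_ex partner by blast

lemma partner_partner: "h \<in> HE \<Longrightarrow> partner (partner h) = h"
  by (metis partner partner_eqI)

section \<open>The AG algorithm as the boundary walk\<close>

abbreviation "walk \<equiv> face V E s t R"

abbreviation "Fn \<equiv> F_next V E s t R"

abbreviation "Mn \<equiv> M_next V E s t R"

abbreviation "AG \<equiv> AG_step V E s t R"

definition marked_corner :: "('v, 'a) qpath \<Rightarrow> ('v, 'a) qpath \<times> nat" where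
  "marked_corner m = (m, length (snd m))"

lemma marked_corner:
  assumes "m \<in> MB"
  shows "marked_corner m \<in> HE \<and> he_marked (marked_corner m) \<and> lab (marked_corner m) = ptgt t m
    \<and> out_arrow (marked_corner m) = None
    \<and> in_arrow (marked_corner m) = (if snd m = [] then None else Some (last (snd m)))"
  using assms
  unfolding marked_corner_def half_edges_def he_marked_def he_label_def ptgt_def out_arrow_def in_arrow_def
  by (auto simp: last_conv_nth)

lemma inj_marked_corner: "inj marked_corner"
  unfolding inj_def marked_corner_def by simp

lemma he_next_marked_corner: "he_next (marked_corner m) = (m, 0)"
  unfolding marked_corner_def he_next_def by simp

lemma marked_iff_marked_corner: "h \<in> HE \<Longrightarrow> he_marked h \<longleftrightarrow> fst h \<in> MB \<and> h = marked_corner (fst h)"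
  unfolding half_edges_def he_marked_def marked_corner_def by (cases h) auto

lemma start_corner: "m \<in> MB \<Longrightarrow> (m, 0) \<in> HE \<and> lab (m, 0) = fst m"
  unfolding half_edges_def he_label_def by simp

lemma walk_in_HE: "h \<in> HE \<Longrightarrow> walk h \<in> HE"
  unfolding face_def using partner he_next_in_HE by blast

lemma walk_out_he: "a \<in> E \<Longrightarrow> walk (out_he a) = partner (in_he a)"
  unfolding face_def using he_next_out_he by simp

lemma partner_in_he_if_rel: assumes "(a, b) \<in> R" shows "partner (in_he a) = out_he b"
proof -
  have ab: "a \<in> E" "b \<in> E" "t a = s b" using relation_arrows[OF assms] by auto
  have "out_he b \<noteq> in_he a"
    using in_out_nonrel_succ[of "out_he b" a b] in_he[OF ab(1)] out_he[OF ab(2)] assms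
    unfolding nonrel_succ_def by auto
  then show ?thesis using partner_eqI in_he out_he label_in_he label_out_he ab by metis
qed

lemma walk_out_he_if_rel: "(a, b) \<in> R \<Longrightarrow> walk (out_he a) = out_he b"
  using walk_out_he partner_in_he_if_rel relation_arrows by simp

lemma walk_along_F_chain:
  assumes "successively (\<lambda>a b. (a, b) \<in> R) xs" "j < length xs"
  shows "(walk ^^ j) (out_he (hd xs)) = out_he (xs ! j)"
  using assms(2)
proof (induction j)
  case 0 then show ?case by (simp add: hd_conv_nth)
next
  case (Suc j)
  then have "(xs ! j, xs ! Suc j) \<in> R" using successively_nth[OF assms(1)] by simp
  then show ?case using Suc walk_out_he_if_rel by simp
qed

lemma F_next_candidate_iff:
  assumes m: "m \<in> MB" and f: "f \<in> FP" "ptgt t f = ptgt t m"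
  shows "(snd m \<noteq> [] \<longrightarrow> last (snd f) \<noteq> last (snd m))
    \<longleftrightarrow> in_he (last (snd f)) = partner (marked_corner m)"
proof -
  let ?g = "last (snd f)" and ?c = "marked_corner m"
  have g: "?g \<in> E" "t ?g = ptgt t m" using f F_paths_iff[of f] unfolding ptgt_def by auto
  note c = marked_corner[OF m]
  have cH: "?c \<in> HE" using c by blast
  have gH: "in_he ?g \<in> HE" "in_arrow (in_he ?g) = Some ?g" using in_he[OF g(1)] by auto
  have "in_he ?g = ?c \<longleftrightarrow> in_arrow ?c = Some ?g"
    using gH in_he_eq[OF cH, of ?g] by metis
  also have "\<dots> \<longleftrightarrow> snd m \<noteq> [] \<and> last (snd m) = ?g" using c by auto
  finally have "in_he ?g \<noteq> ?c \<longleftrightarrow> (snd m \<noteq> [] \<longrightarrow> ?g \<noteq> last (snd m))" by auto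
  moreover have "lab (in_he ?g) = lab ?c" using label_in_he[OF g(1)] g(2) c by simp
  then have "in_he ?g \<noteq> ?c \<longleftrightarrow> in_he ?g = partner ?c"
    using partner_eqI[OF cH gH(1)] partner[OF cH] by metis
  ultimately show ?thesis by simp
qed

lemma partner_marked_corner_in_arrow:
  assumes m: "m \<in> MB" and g: "in_arrow (partner (marked_corner m)) = Some g"
  shows "g \<in> E \<and> partner (marked_corner m) = in_he g \<and> t g = ptgt t m \<and> (\<forall>b. (g, b) \<notin> R)"
proof -
  note c = marked_corner[OF m]
  have cH: "marked_corner m \<in> HE" using c by blast
  have p: "partner (marked_corner m) \<in> HE" using partner[OF cH] by blast
  have gE: "g \<in> E" and in_g: "partner (marked_corner m) = in_he g"
    using in_arrow_SomeD[OF p g] in_he_eq[OF p g] by auto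
  have tg: "t g = ptgt t m" using label_in_he[OF gE] in_g partner[OF cH] c by metis
  have "(g, b) \<notin> R" for b
  proof
    assume gb: "(g, b) \<in> R"
    then have b: "b \<in> E" "s b = t g" using relation_arrows by auto
    have "lab (out_he b) = lab (marked_corner m)" using label_out_he[OF b(1)] b(2) tg c by simp
    moreover have "out_he b \<noteq> marked_corner m" using out_he[OF b(1)] c by auto
    ultimately have "out_he b = partner (marked_corner m)"
      using partner_eqI[OF cH] out_he[OF b(1)] by blast
    then have "nonrel_succ g b" using in_out_nonrel_succ[OF p g] out_he[OF b(1)] by metis
    then show False using gb unfolding nonrel_succ_def by simp
  qed
  then show ?thesis using gE in_g tg by blast
qed

lemma F_next_if_in_arrow:
  assumes m: "m \<in> MB" and g: "in_arrow (partner (marked_corner m)) = Some g"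
  shows "\<exists>xs. Fn m = (s (hd xs), xs) \<and> F.maximal_chain xs \<and> set xs \<subseteq> E \<and> last xs = g"
proof -
  note G = partner_marked_corner_in_arrow[OF m g]
  obtain xs where xs: "F.maximal_chain xs" "set xs \<subseteq> E" "last xs = g"
    using maximal_F_chain_ending G by blast
  let ?f = "(s (hd xs), xs)"
  let ?P = "\<lambda>f. f \<in> FP \<and> ptgt t f = ptgt t m \<and> (snd m \<noteq> [] \<longrightarrow> last (snd f) \<noteq> last (snd m))"
  have ne: "xs \<noteq> []" using xs unfolding F.maximal_chain_def by simp
  have candidate: "?P f \<longleftrightarrow> f \<in> FP \<and> ptgt t f = ptgt t m \<and> last (snd f) = g" for f
  proof (cases "f \<in> FP \<and> ptgt t f = ptgt t m")
    case True
    then have "last (snd f) \<in> E" using F_paths_iff[of f] by auto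
    then show ?thesis using True F_next_candidate_iff[OF m, of f] G inj_onD[OF inj_on_in_he] by metis
  qed auto
  have "?P ?f" unfolding candidate using xs ne G F_paths_iff unfolding ptgt_def by simp
  moreover have "f = ?f" if "?P f" for f
  proof -
    have f: "snd f \<noteq> []" "F.maximal_chain (snd f)" "fst f = s (hd (snd f))" "last (snd f) = g"
      using that F_paths_iff candidate by auto
    then have "snd f = xs"
      using F.maximal_chain_unique[OF f(2) xs(1), of "length (snd f) - 1" "length xs - 1"] ne xs(3)
      by (simp add: last_conv_nth)
    then show ?thesis using f(3) by (simp add: prod_eq_iff)
  qed
  ultimately have "(THE f. ?P f) = ?f" by (rule the_equality)
  then have "Fn m = ?f" using \<open>?P ?f\<close> unfolding F_next_def Let_def by auto
  then show ?thesis using xs by blast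
qed

lemma F_next_if_no_in_arrow:
  assumes m: "m \<in> MB" and none: "in_arrow (partner (marked_corner m)) = None"
  shows "Fn m = (ptgt t m, [])"
proof -
  have "\<not> (f \<in> FP \<and> ptgt t f = ptgt t m \<and> (snd m \<noteq> [] \<longrightarrow> last (snd f) \<noteq> last (snd m)))" for f
  proof
    assume P: "f \<in> FP \<and> ptgt t f = ptgt t m \<and> (snd m \<noteq> [] \<longrightarrow> last (snd f) \<noteq> last (snd m))"
    then have "last (snd f) \<in> E" using F_paths_iff[of f] last_in_set by blast
    then have "in_arrow (in_he (last (snd f))) = Some (last (snd f))" using in_he by blast
    moreover have "in_he (last (snd f)) = partner (marked_corner m)" using F_next_candidate_iff[OF m] P by blast
    ultimately show False using none by simp
  qed
  then show ?thesis unfolding F_next_def Let_def by auto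
qed

lemma M_next_eq_start_corner:
  assumes h: "h \<in> HE" "in_arrow h = None" "lab h = fst f"
    and candidate: "\<And>m'. m' \<in> MP \<Longrightarrow> fst m' = fst f \<Longrightarrow>
      (snd f \<noteq> [] \<longrightarrow> snd m' \<noteq> [] \<and> hd (snd m') \<noteq> hd (snd f)) \<longleftrightarrow> (m', 0) = h"
  shows "Mn f \<in> MB \<and> (Mn f, 0) = h"
proof -
  obtain m0 where h0: "h = (m0, 0)" "m0 \<in> MB"
    using h(1,2) unfolding in_arrow_def half_edges_def by (cases h) (auto split: if_splits)
  have "fst m0 = fst f" using h(3) h0 start_corner by simp
  let ?P = "\<lambda>m'. m' \<in> MP \<and> fst m' = fst f \<and> (snd f \<noteq> [] \<longrightarrow> snd m' \<noteq> [] \<and> hd (snd m') \<noteq> hd (snd f))"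
  have P_iff: "?P m' \<longleftrightarrow> m' \<in> MP \<and> m' = m0" for m'
    using candidate[of m'] h0 \<open>fst m0 = fst f\<close> by auto
  show ?thesis
  proof (cases "m0 \<in> MP")
    case True
    then have ex: "\<exists>m'. ?P m'" using P_iff by blast
    have "Mn f = (THE m'. ?P m')" unfolding M_next_def Let_def by (rule if_P[OF ex])
    also have "\<dots> = m0" using True P_iff by blast
    finally show ?thesis using h0 by simp
  next
    case False
    then have "Mn f = (fst f, [])" using P_iff unfolding M_next_def Let_def by auto
    moreover have "m0 = (fst f, [])"
      using Mbar_cases[OF h0(2)] False \<open>fst m0 = fst f\<close> by (simp add: prod_eq_iff)
    ultimately show ?thesis using h0 by simp
  qed
qed

lemma AG_step_if_no_in_arrow:
  assumes m: "m \<in> MB" and none: "in_arrow (partner (marked_corner m)) = None"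
  shows "Fn m = (ptgt t m, []) \<and> AG m \<in> MB \<and> walk (marked_corner (AG m)) = marked_corner m"
proof -
  let ?c = "marked_corner m"
  note c = marked_corner[OF m]
  have cH: "?c \<in> HE" and pH: "partner ?c \<in> HE" using c partner by blast+
  have F: "Fn m = (ptgt t m, [])" by (rule F_next_if_no_in_arrow[OF m none])
  have "Mn (ptgt t m, []) \<in> MB \<and> (Mn (ptgt t m, []), 0) = partner ?c"
  proof (rule M_next_eq_start_corner)
    show "lab (partner ?c) = fst (ptgt t m, [])" using partner[OF cH] c by simp
    fix m' assume m': "m' \<in> MP" "fst m' = fst (ptgt t m, ([] :: 'a list))"
    have "(m', 0) \<in> HE" "lab (m', 0) = lab ?c" using start_corner[of m'] m' c unfolding Mbar_def by auto
    moreover have "(m', 0) \<noteq> ?c"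
      using m'(1) max_paths_iff[of m'] unfolding marked_corner_def by auto
    ultimately show "(snd (ptgt t m, ([] :: 'a list)) \<noteq> [] \<longrightarrow> snd m' \<noteq> [] \<and> hd (snd m') \<noteq> hd (snd (ptgt t m, [])))
      \<longleftrightarrow> (m', 0) = partner ?c"
      using partner_eqI[OF cH] by simp
  qed (use pH none in auto)
  then have "AG m \<in> MB" "(AG m, 0) = partner ?c" unfolding AG_step_def F by auto
  moreover have "walk (marked_corner (AG m)) = partner (AG m, 0)"
    unfolding face_def he_next_marked_corner ..
  ultimately show ?thesis using F partner_partner[OF cH] by simp
qed

lemma partner_out_he_no_in_arrow:
  assumes a: "a \<in> E" and no_pred: "\<forall>c. (c, a) \<notin> R"
  shows "in_arrow (partner (out_he a)) = None"
proof (rule ccontr)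
  have oH: "out_he a \<in> HE" and pH: "partner (out_he a) \<in> HE" using out_he[OF a] partner by blast+
  assume "in_arrow (partner (out_he a)) \<noteq> None"
  then obtain c where c: "in_arrow (partner (out_he a)) = Some c" by blast
  then have cE: "c \<in> E" and in_c: "partner (out_he a) = in_he c"
    using in_arrow_SomeD[OF pH] in_he_eq[OF pH] by auto
  then have "t c = s a" using label_in_he partner[OF oH] label_out_he[OF a] by metis
  then have "in_he c = out_he a"
    using nonrel_succ_in_he_eq_out_he cE a no_pred unfolding nonrel_succ_def by simp
  then show False using partner[OF oH] in_c by simp
qed

lemma M_next_after_F_path:
  assumes xs: "F.maximal_chain xs" "set xs \<subseteq> E"
  shows "Mn (s (hd xs), xs) \<in> MB \<and> (Mn (s (hd xs), xs), 0) = partner (out_he (hd xs))"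
proof -
  let ?a = "hd xs"
  have ne: "xs \<noteq> []" and a: "?a \<in> E" "\<forall>c. (c, ?a) \<notin> R" using xs unfolding F.maximal_chain_def by auto
  note o = out_he[OF a(1)]
  have oH: "out_he ?a \<in> HE" and pH: "partner (out_he ?a) \<in> HE" using o partner by blast+
  show ?thesis
  proof (rule M_next_eq_start_corner[OF pH partner_out_he_no_in_arrow[OF a]])
    show "lab (partner (out_he ?a)) = fst (s ?a, xs)" using partner[OF oH] label_out_he[OF a(1)] by simp
    fix m' assume m': "m' \<in> MP" "fst m' = fst (s ?a, xs)"
    then have m'_ne: "snd m' \<noteq> []" using max_paths_iff by blast
    have start: "(m', 0) \<in> HE" "out_arrow (m', 0) = Some (hd (snd m'))" "lab (m', 0) = lab (out_he ?a)"
      using start_corner[of m'] m' m'_ne label_out_he[OF a(1)] unfolding Mbar_def out_arrow_def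
      by (auto simp: hd_conv_nth)
    have "(m', 0) = partner (out_he ?a) \<longleftrightarrow> (m', 0) \<noteq> out_he ?a"
      using partner_eqI[OF oH start(1) _ start(3)] partner[OF oH] by metis
    also have "\<dots> \<longleftrightarrow> hd (snd m') \<noteq> ?a"
    proof
      assume "(m', 0) \<noteq> out_he ?a"
      then show "hd (snd m') \<noteq> ?a" using out_he_eq[OF start(1,2)] by auto
    next
      assume "hd (snd m') \<noteq> ?a"
      then show "(m', 0) \<noteq> out_he ?a" using start(2) o by auto
    qed
    finally show "(snd (s ?a, xs) \<noteq> [] \<longrightarrow> snd m' \<noteq> [] \<and> hd (snd m') \<noteq> hd (snd (s ?a, xs)))
      \<longleftrightarrow> (m', 0) = partner (out_he ?a)"
      using m'_ne ne by auto
  qed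
qed

lemma AG_step_if_in_arrow:
  assumes m: "m \<in> MB" and g: "in_arrow (partner (marked_corner m)) = Some g"
  obtains xs where "Fn m = (s (hd xs), xs)" "F.maximal_chain xs" "set xs \<subseteq> E" "last xs = g"
    "AG m \<in> MB" "walk (marked_corner (AG m)) = out_he (hd xs)"
proof -
  obtain xs where xs: "Fn m = (s (hd xs), xs)" "F.maximal_chain xs" "set xs \<subseteq> E" "last xs = g"
    using F_next_if_in_arrow[OF m g] by blast
  have "hd xs \<in> E" using xs(2,3) unfolding F.maximal_chain_def by auto
  then have oH: "out_he (hd xs) \<in> HE" using out_he by blast
  have "AG m \<in> MB" "(AG m, 0) = partner (out_he (hd xs))"
    using M_next_after_F_path[OF xs(2,3)] unfolding AG_step_def xs(1) by auto
  moreover have "walk (marked_corner (AG m)) = partner (AG m, 0)"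
    unfolding face_def he_next_marked_corner ..
  ultimately show thesis using that xs partner_partner[OF oH] by simp
qed

lemma AG_step_in_Mbar: "m \<in> MB \<Longrightarrow> AG m \<in> MB"
  by (cases "in_arrow (partner (marked_corner m))")
    (use AG_step_if_no_in_arrow AG_step_if_in_arrow in blast)+

lemma walk_from_AG_step:
  assumes m: "m \<in> MB"
  shows "(walk ^^ Suc (length (snd (Fn m)))) (marked_corner (AG m)) = marked_corner m"
    and "0 < j \<Longrightarrow> j \<le> length (snd (Fn m)) \<Longrightarrow> \<not> he_marked ((walk ^^ j) (marked_corner (AG m)))"
proof (atomize (full), cases "in_arrow (partner (marked_corner m))")
  case None
  then show "(walk ^^ Suc (length (snd (Fn m)))) (marked_corner (AG m)) = marked_corner m
    \<and> (0 < j \<longrightarrow> j \<le> length (snd (Fn m)) \<longrightarrow> \<not> he_marked ((walk ^^ j) (marked_corner (AG m))))"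
    using AG_step_if_no_in_arrow[OF m] by simp
next
  case (Some g)
  then obtain xs where xs: "Fn m = (s (hd xs), xs)" "F.maximal_chain xs" "set xs \<subseteq> E" "last xs = g"
    and walk1: "walk (marked_corner (AG m)) = out_he (hd xs)"
    using AG_step_if_in_arrow[OF m] by blast
  have ne: "xs \<noteq> []" and chain: "successively (\<lambda>a b. (a, b) \<in> R) xs"
    using xs(2) unfolding F.maximal_chain_def by auto
  have iter: "(walk ^^ Suc i) (marked_corner (AG m)) = out_he (xs ! i)" if "i < length xs" for i
    unfolding funpow_Suc_right comp_apply walk1 by (rule walk_along_F_chain[OF chain that])
  note G = partner_marked_corner_in_arrow[OF m Some]
  have "(walk ^^ Suc (length xs)) (marked_corner (AG m)) = walk (out_he (xs ! (length xs - 1)))"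
    using iter[of "length xs - 1"] ne by simp
  also have "\<dots> = partner (partner (marked_corner m))"
    using xs(4) ne G walk_out_he by (simp add: last_conv_nth)
  also have "\<dots> = marked_corner m" using partner_partner marked_corner[OF m] by blast
  finally have "(walk ^^ Suc (length xs)) (marked_corner (AG m)) = marked_corner m" .
  moreover have "\<not> he_marked ((walk ^^ j) (marked_corner (AG m)))" if "0 < j" "j \<le> length xs"
  proof -
    have "(walk ^^ j) (marked_corner (AG m)) = out_he (xs ! (j - 1))" using iter[of "j - 1"] that by simp
    moreover have "xs ! (j - 1) \<in> E" using xs(3) that by auto
    ultimately show ?thesis using out_he marked_iff_no_out_arrow by auto
  qed
  ultimately show "(walk ^^ Suc (length (snd (Fn m)))) (marked_corner (AG m)) = marked_corner m
    \<and> (0 < j \<longrightarrow> j \<le> length (snd (Fn m)) \<longrightarrow> \<not> he_marked ((walk ^^ j) (marked_corner (AG m))))"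
    using xs(1) by simp
qed

section \<open>Boundary components\<close>

lemma finite_Mbar: "finite MB"
proof -
  let ?L = "{xs. set xs \<subseteq> E \<and> length xs \<le> card E}"
  have "MP \<subseteq> V \<times> ?L"
  proof
    fix m assume "m \<in> MP"
    then have m: "snd m \<noteq> []" "M.maximal_chain (snd m)" "set (snd m) \<subseteq> E" "fst m = s (hd (snd m))"
      using max_paths_iff by blast+
    then have "distinct (snd m)" using M.distinct_if_no_successor unfolding M.maximal_chain_def by blast
    then have "length (snd m) \<le> card E" using card_mono[OF finite_E m(3)] by (simp add: distinct_card)
    moreover have "fst m \<in> V" using m(1,3,4) source_in_V hd_in_set by auto
    ultimately show "m \<in> V \<times> ?L" using m(3) by (cases m) auto
  qed
  moreover have "M0 V E s t R \<subseteq> (\<lambda>v. (v, [])) ` V" unfolding M0_def by auto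
  ultimately show ?thesis
    using finite_subset finite_V finite_lists_length_le[OF finite_E] unfolding Mbar_def by blast
qed

lemma finite_half_edges: "finite HE"
proof -
  have "length (snd m) \<le> card E" if "m \<in> MB" for m
  proof (cases "snd m = []")
    case False
    then have "M.maximal_chain (snd m)" "set (snd m) \<subseteq> E" using Mbar_nontrivial that by blast+
    then show ?thesis using M.distinct_if_no_successor card_mono[OF finite_E]
      unfolding M.maximal_chain_def by (metis distinct_card)
  qed simp
  then have "HE \<subseteq> MB \<times> {..card E}" unfolding half_edges_def by fastforce
  then show ?thesis using finite_Mbar finite_subset by blast
qed

lemma inj_on_walk: "inj_on walk HE"
proof (rule inj_onI)
  fix x y assume xy: "x \<in> HE" "y \<in> HE" "walk x = walk y"
  then have "partner (partner (he_next x)) = partner (partner (he_next y))" unfolding face_def by simp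
  then have "he_next x = he_next y" using partner_partner he_next_in_HE xy by simp
  then show "x = y" using inj_he_next unfolding inj_def by blast
qed

sublocale walk: finite_injection walk HE
  using finite_half_edges walk_in_HE inj_on_walk by unfold_locales auto

lemma return_time_AG_step:
  assumes m: "m \<in> MB"
  shows "walk.return_time he_marked (marked_corner (AG m)) = Suc (length (snd (Fn m)))"
  unfolding walk.return_time_def
proof (rule Least_equality)
  show "0 < Suc (length (snd (Fn m))) \<and> he_marked ((walk ^^ Suc (length (snd (Fn m)))) (marked_corner (AG m)))"
    using walk_from_AG_step(1)[OF m] marked_corner[OF m] by simp
  show "Suc (length (snd (Fn m))) \<le> n" if "0 < n \<and> he_marked ((walk ^^ n) (marked_corner (AG m)))" for n
    using walk_from_AG_step(2)[OF m, of n] that by (meson not_less_eq_eq)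
qed

lemma jump_to_marked_corner: "m \<in> MB \<Longrightarrow>
  (walk ^^ walk.return_time he_marked (marked_corner (AG m))) (marked_corner (AG m)) = marked_corner m"
  using walk_from_AG_step(1) return_time_AG_step by simp

lemma inj_on_AG_step: "inj_on AG MB"
proof (rule inj_onI)
  fix x y assume xy: "x \<in> MB" "y \<in> MB" "AG x = AG y"
  then have "marked_corner x = marked_corner y" using jump_to_marked_corner by metis
  then show "x = y" unfolding marked_corner_def by simp
qed

sublocale AG: finite_injection AG MB
  using finite_Mbar AG_step_in_Mbar inj_on_AG_step by unfold_locales auto

lemma walk_orbit_marked_corner_AG_step:
  "m \<in> MB \<Longrightarrow> walk.forward_orbit (marked_corner (AG m)) = walk.forward_orbit (marked_corner m)"
  using jump_to_marked_corner walk.funpow_in_forward_orbit walk.forward_orbit_eqI marked_corner AG_step_in_Mbar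
  by metis

lemma walk_orbit_marked_corner_AG_iter:
  "m \<in> MB \<Longrightarrow> walk.forward_orbit (marked_corner ((AG ^^ i) m)) = walk.forward_orbit (marked_corner m)"
  by (induction i) (simp_all add: walk_orbit_marked_corner_AG_step AG.funpow_in)

lemma returns_from_marked_corner:
  assumes "m \<in> MB"
  shows "((\<lambda>y. (walk ^^ walk.return_time he_marked y) y) ^^ k) (marked_corner m)
    \<in> marked_corner ` AG.forward_orbit m"
  using assms
proof (induction k arbitrary: m)
  case 0
  then show ?case using AG.self_in_forward_orbit by simp
next
  case (Suc k)
  let ?jump = "\<lambda>y. (walk ^^ walk.return_time he_marked y) y"
  define p where "p = (AG ^^ (AG.period m - 1)) m"
  have p: "p \<in> MB" "AG p = m" "p \<in> AG.forward_orbit m"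
    using AG.predecessor_in_forward_orbit[OF Suc.prems] AG.funpow_in Suc.prems unfolding p_def by auto
  have jump: "?jump (marked_corner m) = marked_corner p"
    using jump_to_marked_corner[OF p(1)] p(2) by simp
  have "(?jump ^^ Suc k) (marked_corner m) = (?jump ^^ k) (marked_corner p)"
    unfolding funpow_Suc_right comp_apply jump ..
  also have "\<dots> \<in> marked_corner ` AG.forward_orbit p" using Suc.IH[OF p(1)] .
  finally show ?case using AG.forward_orbit_eqI[OF Suc.prems p(3)] by simp
qed

lemma marked_corners_in_walk_orbit:
  assumes m: "m \<in> MB"
  shows "{h \<in> walk.forward_orbit (marked_corner m). he_marked h} = marked_corner ` AG.forward_orbit m"
proof (intro equalityI subsetI)
  fix h assume h: "h \<in> {h \<in> walk.forward_orbit (marked_corner m). he_marked h}"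
  then obtain n where "h = (walk ^^ n) (marked_corner m)" unfolding walk.forward_orbit_def by auto
  then obtain k where "h = ((\<lambda>y. (walk ^^ walk.return_time he_marked y) y) ^^ k) (marked_corner m)"
    using walk.iterate_reached_by_returns[of "marked_corner m" he_marked n] marked_corner[OF m] h by auto
  then show "h \<in> marked_corner ` AG.forward_orbit m" using returns_from_marked_corner[OF m] by simp
next
  fix h assume "h \<in> marked_corner ` AG.forward_orbit m"
  then obtain i where i: "h = marked_corner ((AG ^^ i) m)" unfolding AG.forward_orbit_def by auto
  then have "h \<in> walk.forward_orbit (marked_corner m)"
    using walk_orbit_marked_corner_AG_iter[OF m, of i] walk.self_in_forward_orbit by metis
  moreover have "he_marked h" using marked_corner[OF AG.funpow_in[OF m]] i by simp
  ultimately show "h \<in> {h \<in> walk.forward_orbit (marked_corner m). he_marked h}" by simp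
qed

abbreviation "BC \<equiv> bdry_comps V E s t R"

lemma bdry_comps_eq: "BC = walk.forward_orbit ` HE"
  unfolding bdry_comps_def walk.forward_orbit_def ..

lemma AG_k_eq_period: "AG_k V E s t R m = AG.period m"
  unfolding AG_k_def AG.period_def ..

lemma AG_run_eq_forward_orbit: "m \<in> MB \<Longrightarrow> AG_run V E s t R m = AG.forward_orbit m"
  unfolding AG_run_def AG_k_eq_period using AG.forward_orbit_eq_image by simp

lemma n_lam_ends_eq_card: "B \<subseteq> HE \<Longrightarrow> n_lam_ends V E s t R B = card B"
proof -
  assume "B \<subseteq> HE"
  then have "{h \<in> HE. \<exists>c\<in>B. he_next c = h} = he_next ` B" using he_next_in_HE by blast
  then show ?thesis unfolding n_lam_ends_def using card_image inj_he_next by (metis inj_on_subset subset_UNIV)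
qed

lemma card_walk_orbit_marked_corner:
  assumes m: "m \<in> MB"
  shows "card (walk.forward_orbit (marked_corner m)) = AG.period m + AG_l V E s t R m"
proof -
  have c: "marked_corner m \<in> HE" "he_marked (marked_corner m)" using marked_corner[OF m] by auto
  have orbit: "AG.forward_orbit m \<subseteq> MB" using AG.forward_orbit_subset[OF m] .
  have "card (walk.forward_orbit (marked_corner m))
      = (\<Sum>h\<in>marked_corner ` AG.forward_orbit m. walk.return_time he_marked h)"
    using walk.sum_return_time[of "marked_corner m" he_marked] c marked_corners_in_walk_orbit[OF m] by simp
  also have "\<dots> = (\<Sum>x\<in>AG ` AG.forward_orbit m. walk.return_time he_marked (marked_corner x))"
    using inj_marked_corner by (subst sum.reindex) (auto intro: inj_on_subset simp: AG.image_forward_orbit[OF m])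
  also have "\<dots> = (\<Sum>x\<in>AG.forward_orbit m. walk.return_time he_marked (marked_corner (AG x)))"
    using sum.reindex[OF inj_on_subset[OF inj_on_AG_step orbit]] by (simp add: comp_def)
  also have "\<dots> = (\<Sum>x\<in>AG.forward_orbit m. Suc (length (snd (Fn x))))"
    using return_time_AG_step orbit by (intro sum.cong) auto
  also have "\<dots> = (\<Sum>i<AG.period m. Suc (length (snd (Fn ((AG ^^ i) m)))))"
    using AG.forward_orbit_eq_image[OF m] AG.inj_on_funpow_period[OF m] by (simp add: sum.reindex)
  also have "\<dots> = AG.period m + AG_l V E s t R m"
    unfolding AG_l_def AG_k_eq_period by (simp only: Suc_eq_plus1_left sum.distrib) simp
  finally show ?thesis .
qed

lemma n_marked_walk_orbit_marked_corner:
  assumes m: "m \<in> MB" shows "n_marked (walk.forward_orbit (marked_corner m)) = AG.period m"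
proof -
  have "n_marked (walk.forward_orbit (marked_corner m)) = card (marked_corner ` AG.forward_orbit m)"
    unfolding n_marked_def using marked_corners_in_walk_orbit[OF m] by simp
  also have "\<dots> = card (AG.forward_orbit m)" by (rule card_image[OF inj_on_subset[OF inj_marked_corner]]) simp
  also have "\<dots> = AG.period m" by (rule AG.card_forward_orbit[OF m])
  finally show ?thesis .
qed

lemma c_val_walk_orbit_marked_corner:
  "m \<in> MB \<Longrightarrow> c_val V E s t R (walk.forward_orbit (marked_corner m)) = int (AG_l V E s t R m)"
  using walk.forward_orbit_subset marked_corner n_lam_ends_eq_card card_walk_orbit_marked_corner
    n_marked_walk_orbit_marked_corner unfolding c_val_def by simp

lemma bdry_comp_of_marked_corner:
  assumes B: "B \<in> BC" and c: "c \<in> B" "he_marked c"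
  shows "fst c \<in> MB \<and> B = walk.forward_orbit (marked_corner (fst c))"
proof -
  obtain h where h: "h \<in> HE" "B = walk.forward_orbit h" using B bdry_comps_eq by auto
  then have "c \<in> HE" using walk.forward_orbit_subset c by blast
  then have "fst c \<in> MB" "c = marked_corner (fst c)" using marked_iff_marked_corner c(2) by auto
  then show ?thesis using walk.forward_orbit_eqI h c by metis
qed

lemma n_marked_eq_0_iff: "B \<in> BC \<Longrightarrow> n_marked B = 0 \<longleftrightarrow> (\<forall>c\<in>B. \<not> he_marked c)"
  unfolding n_marked_def bdry_comps_eq using walk.finite_forward_orbit by auto

lemma walk_orbits_eq_iff_AG_orbits_eq:
  assumes m: "m \<in> MB" and m': "m' \<in> MB"
  shows "walk.forward_orbit (marked_corner m) = walk.forward_orbit (marked_corner m')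
    \<longleftrightarrow> AG.forward_orbit m = AG.forward_orbit m'"
proof
  assume "walk.forward_orbit (marked_corner m) = walk.forward_orbit (marked_corner m')"
  then have "marked_corner ` AG.forward_orbit m = marked_corner ` AG.forward_orbit m'"
    unfolding marked_corners_in_walk_orbit[OF m, symmetric] marked_corners_in_walk_orbit[OF m', symmetric]
    by simp
  then show "AG.forward_orbit m = AG.forward_orbit m'"
    using inj_image_eq_iff[OF inj_marked_corner] by blast
next
  assume "AG.forward_orbit m = AG.forward_orbit m'"
  then have "m' \<in> AG.forward_orbit m" using AG.self_in_forward_orbit by simp
  then obtain i where "m' = (AG ^^ i) m" unfolding AG.forward_orbit_def by auto
  then show "walk.forward_orbit (marked_corner m) = walk.forward_orbit (marked_corner m')"
    using walk_orbit_marked_corner_AG_iter[OF m, of i] by simp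
qed

lemma marked_bdry_comps_eq:
  assumes "x \<noteq> 0"
  shows "{B \<in> BC. n_marked B = x \<and> c_val V E s t R B = int y}
    = (\<lambda>m. walk.forward_orbit (marked_corner m)) ` {m \<in> MB. AG_k V E s t R m = x \<and> AG_l V E s t R m = y}"
proof (intro equalityI subsetI)
  fix B assume B: "B \<in> {B \<in> BC. n_marked B = x \<and> c_val V E s t R B = int y}"
  then have BC: "B \<in> BC" and "n_marked B \<noteq> 0" using assms by auto
  then have "\<exists>c\<in>B. he_marked c" using n_marked_eq_0_iff by simp
  then obtain c where "c \<in> B" "he_marked c" by blast
  then have "fst c \<in> MB" "B = walk.forward_orbit (marked_corner (fst c))"
    using bdry_comp_of_marked_corner[OF BC] by auto
  then show "B \<in> (\<lambda>m. walk.forward_orbit (marked_corner m))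
      ` {m \<in> MB. AG_k V E s t R m = x \<and> AG_l V E s t R m = y}"
    using B n_marked_walk_orbit_marked_corner c_val_walk_orbit_marked_corner AG_k_eq_period
    by (auto intro!: image_eqI[of _ _ "fst c"])
next
  fix B assume "B \<in> (\<lambda>m. walk.forward_orbit (marked_corner m))
      ` {m \<in> MB. AG_k V E s t R m = x \<and> AG_l V E s t R m = y}"
  then obtain m where m: "m \<in> MB" "AG_k V E s t R m = x" "AG_l V E s t R m = y"
    "B = walk.forward_orbit (marked_corner m)" by blast
  then have "B \<in> BC" using bdry_comps_eq marked_corner by auto
  then show "B \<in> {B \<in> BC. n_marked B = x \<and> c_val V E s t R B = int y}"
    using m n_marked_walk_orbit_marked_corner c_val_walk_orbit_marked_corner AG_k_eq_period by auto
qed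

lemma card_marked_bdry_comps:
  assumes "x \<noteq> 0"
  shows "card {B \<in> BC. n_marked B = x \<and> c_val V E s t R B = int y}
    = card (AG_run V E s t R ` {m \<in> MB. AG_k V E s t R m = x \<and> AG_l V E s t R m = y})"
  unfolding marked_bdry_comps_eq[OF assms]
proof (rule card_image_eq_if_same_fibres)
  fix m m' assume "m \<in> {m \<in> MB. AG_k V E s t R m = x \<and> AG_l V E s t R m = y}"
    "m' \<in> {m \<in> MB. AG_k V E s t R m = x \<and> AG_l V E s t R m = y}"
  then show "walk.forward_orbit (marked_corner m) = walk.forward_orbit (marked_corner m')
    \<longleftrightarrow> AG_run V E s t R m = AG_run V E s t R m'"
    using walk_orbits_eq_iff_AG_orbits_eq[of m m'] AG_run_eq_forward_orbit by simp
qed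

lemma c_val_eq_sum_piece_sides:
  assumes B: "B \<in> BC" and "n_marked B \<noteq> 0"
  shows "c_val V E s t R B = (\<Sum>c \<in> {c \<in> B. he_marked c}. int (piece_sides V E s t R c) - 2)"
proof -
  obtain c where c: "c \<in> B" "he_marked c" using n_marked_eq_0_iff[OF B] assms(2) by auto
  then have m: "fst c \<in> MB" "B = walk.forward_orbit (marked_corner (fst c))"
    using bdry_comp_of_marked_corner[OF B] by auto
  note mc = marked_corner[OF m(1)]
  have "B \<subseteq> HE" using walk.forward_orbit_subset mc m(2) by blast
  have "piece_sides V E s t R h = walk.return_time he_marked h + 1" for h
    unfolding piece_sides_def walk.return_time_def ..
  then have "(\<Sum>c \<in> {c \<in> B. he_marked c}. int (piece_sides V E s t R c) - 2)
      = (\<Sum>c \<in> {c \<in> B. he_marked c}. int (walk.return_time he_marked c)) - int (n_marked B)"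
    unfolding n_marked_def by (simp add: sum_subtractf)
  also have "(\<Sum>c \<in> {c \<in> B. he_marked c}. int (walk.return_time he_marked c)) = int (card B)"
    using walk.sum_return_time[of "marked_corner (fst c)" he_marked] mc m(2) by (simp flip: of_nat_sum)
  finally show ?thesis unfolding c_val_def using n_lam_ends_eq_card[OF \<open>B \<subseteq> HE\<close>] by simp
qed

lemma unmarked_eq_out_he:
  assumes "h \<in> HE" "\<not> he_marked h"
  shows "the (out_arrow h) \<in> E \<and> h = out_he (the (out_arrow h))"
proof -
  obtain a where a: "out_arrow h = Some a" using assms marked_iff_no_out_arrow by (cases "out_arrow h") auto
  then show ?thesis using out_arrow_SomeD[OF assms(1) a] out_he_eq[OF assms(1) a] by simp
qed

lemma unmarked_walk_step_rel:
  assumes h: "h \<in> HE" "\<not> he_marked h" and walk_h: "\<not> he_marked (walk h)"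
  shows "(the (out_arrow h), the (out_arrow (walk h))) \<in> R"
proof (rule ccontr)
  let ?a = "the (out_arrow h)" and ?b = "the (out_arrow (walk h))"
  assume not_rel: "(?a, ?b) \<notin> R"
  have a: "?a \<in> E" "h = out_he ?a" using unmarked_eq_out_he[OF h] by auto
  have b: "?b \<in> E" "walk h = out_he ?b" using unmarked_eq_out_he[OF walk_in_HE[OF h(1)] walk_h] by auto
  have walk_a: "walk h = partner (in_he ?a)" using walk_out_he[OF a(1)] a(2) by simp
  then have "t ?a = s ?b" using label_in_he[OF a(1)] label_out_he[OF b(1)] partner in_he[OF a(1)] b(2) by metis
  then have "in_he ?a = out_he ?b" using nonrel_succ_in_he_eq_out_he a(1) b(1) not_rel
    unfolding nonrel_succ_def by simp
  then show False using walk_a b(2) partner in_he[OF a(1)] by metis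
qed

lemma walk_along_full_rel_cycle:
  assumes cs: "cs \<in> full_rel_cycles E R"
  shows "(walk ^^ i) (out_he (cs ! 0)) = out_he (cs ! (i mod length cs))"
proof (induction i)
  case (Suc i)
  have "cs \<noteq> []" "(cs ! (i mod length cs), cs ! (Suc (i mod length cs) mod length cs)) \<in> R"
    using cs unfolding full_rel_cycles_def by auto
  then show ?case using Suc walk_out_he_if_rel by (simp add: mod_Suc_eq)
qed simp

lemma walk_orbit_of_full_rel_cycle:
  assumes cs: "cs \<in> full_rel_cycles E R"
  shows "walk.forward_orbit (out_he (cs ! 0)) = out_he ` set cs"
proof -
  have ne: "cs \<noteq> []" using cs unfolding full_rel_cycles_def by simp
  have "range (\<lambda>i. cs ! (i mod length cs)) = set cs"
  proof
    show "range (\<lambda>i. cs ! (i mod length cs)) \<subseteq> set cs" using ne by auto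
    show "set cs \<subseteq> range (\<lambda>i. cs ! (i mod length cs))"
    proof
      fix x assume "x \<in> set cs"
      then obtain j where "j < length cs" "x = cs ! j" by (auto simp: in_set_conv_nth)
      then show "x \<in> range (\<lambda>i. cs ! (i mod length cs))" by (intro range_eqI[of _ _ j]) simp
    qed
  qed
  moreover have "walk.forward_orbit (out_he (cs ! 0)) = out_he ` range (\<lambda>i. cs ! (i mod length cs))"
    unfolding walk.forward_orbit_def walk_along_full_rel_cycle[OF cs] by (simp only: image_image)
  ultimately show ?thesis by simp
qed

lemma unmarked_walk_orbit_full_rel_cycle:
  assumes h: "h \<in> HE" and unmarked: "\<forall>c\<in>walk.forward_orbit h. \<not> he_marked c"
  shows "\<exists>cs\<in>full_rel_cycles E R. set cs = (\<lambda>c. the (out_arrow c)) ` walk.forward_orbit h"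
proof -
  let ?p = "walk.period h" and ?arr = "\<lambda>i. the (out_arrow ((walk ^^ i) h))"
  define cs where "cs = map ?arr [0..<?p]"
  have p: "0 < ?p" using walk.period[OF h] by blast
  have in_orbit: "(walk ^^ i) h \<in> walk.forward_orbit h" for i by (rule walk.funpow_in_forward_orbit)
  have arr: "?arr i \<in> E \<and> (walk ^^ i) h = out_he (?arr i)" for i
    using unmarked_eq_out_he walk.funpow_in[OF h] in_orbit unmarked by blast
  have "inj_on ?arr {0..<?p}"
    using walk.inj_on_funpow_period[OF h] arr unfolding inj_on_def by (metis atLeast0LessThan)
  then have "distinct cs" unfolding cs_def by (simp add: distinct_map)
  moreover have "set cs = (\<lambda>c. the (out_arrow c)) ` walk.forward_orbit h"
    unfolding cs_def walk.forward_orbit_eq_image[OF h] by (auto simp: atLeast0LessThan)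
  moreover have "(cs ! j, cs ! (Suc j mod length cs)) \<in> R" if "j < length cs" for j
  proof -
    have "(walk ^^ (Suc j mod ?p)) h = walk ((walk ^^ j) h)"
      using walk.funpow_mod_period[OF h, of "Suc j"] by simp
    then show ?thesis
      using that p unmarked_walk_step_rel[OF walk.funpow_in[OF h] _ _, of j] unmarked in_orbit[of j]
        in_orbit[of "Suc j"] unfolding cs_def by auto
  qed
  moreover have "set cs \<subseteq> E" "cs \<noteq> []" unfolding cs_def using arr[THEN conjunct1] p by auto
  ultimately have "cs \<in> full_rel_cycles E R" unfolding full_rel_cycles_def by blast
  then show ?thesis using \<open>set cs = _\<close> by blast
qed

lemma full_rel_cycle_rotation:
  assumes cs1: "cs1 \<in> full_rel_cycles E R" and cs2: "cs2 \<in> full_rel_cycles E R"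
    and same_set: "set cs1 = set cs2"
  shows "\<exists>a. cs2 = rotate a cs1"
proof -
  let ?L = "length cs1"
  have c1: "cs1 \<noteq> []" "distinct cs1" "\<forall>j < ?L. (cs1 ! j, cs1 ! (Suc j mod ?L)) \<in> R"
    using cs1 unfolding full_rel_cycles_def by auto
  have c2: "distinct cs2" "\<forall>j < length cs2. (cs2 ! j, cs2 ! (Suc j mod length cs2)) \<in> R"
    using cs2 unfolding full_rel_cycles_def by auto
  have len: "length cs2 = ?L" using same_set c1(2) c2(1) distinct_card by metis
  obtain a where a: "a < ?L" "cs1 ! a = cs2 ! 0"
    using same_set c1(1) len by (metis in_set_conv_nth length_greater_0_conv nth_mem)
  have "cs2 ! i = cs1 ! ((a + i) mod ?L)" if "i < ?L" for i
    using that
  proof (induction i)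
    case (Suc i)
    have "(cs2 ! i, cs2 ! Suc i) \<in> R" using c2(2) Suc.prems len by (metis Suc_lessD mod_less)
    moreover have "(cs1 ! ((a + i) mod ?L), cs1 ! (Suc ((a + i) mod ?L) mod ?L)) \<in> R"
      using c1 by simp
    ultimately show ?case using F.succ_unique Suc by (simp add: mod_Suc_eq)
  qed (use a in simp)
  then have "cs2 = rotate a cs1" using len by (intro nth_equalityI) (auto simp: nth_rotate)
  then show ?thesis by blast
qed

lemma rot_class_eq_iff_set_eq:
  assumes "cs1 \<in> full_rel_cycles E R" "cs2 \<in> full_rel_cycles E R"
  shows "rot_class cs1 = rot_class cs2 \<longleftrightarrow> set cs1 = set cs2"
proof
  assume "rot_class cs1 = rot_class cs2"
  then have "cs2 \<in> rot_class cs1" unfolding rot_class_def by (metis rangeI rotate0 id_apply)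
  then show "set cs1 = set cs2" unfolding rot_class_def by auto
next
  assume "set cs1 = set cs2"
  then show "rot_class cs1 = rot_class cs2"
    using full_rel_cycle_rotation[OF assms] rot_class_rotate assms unfolding full_rel_cycles_def by auto
qed

lemma card_out_he_full_rel_cycle:
  "cs \<in> full_rel_cycles E R \<Longrightarrow> card (out_he ` set cs) = length cs"
  using card_image[OF inj_on_subset[OF inj_on_out_he]] distinct_card unfolding full_rel_cycles_def by auto

lemma unmarked_bdry_comps_eq:
  "{B \<in> BC. n_marked B = 0 \<and> c_val V E s t R B = int y}
     = (\<lambda>cs. out_he ` set cs) ` {cs \<in> full_rel_cycles E R. length cs = y}"
proof (intro equalityI subsetI)
  fix B assume B: "B \<in> {B \<in> BC. n_marked B = 0 \<and> c_val V E s t R B = int y}"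
  then obtain h where h: "h \<in> HE" "B = walk.forward_orbit h" using bdry_comps_eq by auto
  have unmarked: "\<forall>c\<in>B. \<not> he_marked c" using n_marked_eq_0_iff B by blast
  obtain cs where cs: "cs \<in> full_rel_cycles E R" "set cs = (\<lambda>c. the (out_arrow c)) ` B"
    using unmarked_walk_orbit_full_rel_cycle[OF h(1)] unmarked h(2) by blast
  have B_sub: "B \<subseteq> HE" using walk.forward_orbit_subset h by blast
  then have "out_he ` set cs = B" using cs(2) unmarked unmarked_eq_out_he by (force simp: image_image)
  moreover have "length cs = y"
    using B card_out_he_full_rel_cycle[OF cs(1)] calculation n_lam_ends_eq_card[OF B_sub]
    unfolding c_val_def by simp
  ultimately show "B \<in> (\<lambda>cs. out_he ` set cs) ` {cs \<in> full_rel_cycles E R. length cs = y}"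
    using cs(1) by blast
next
  fix B assume "B \<in> (\<lambda>cs. out_he ` set cs) ` {cs \<in> full_rel_cycles E R. length cs = y}"
  then obtain cs where cs: "cs \<in> full_rel_cycles E R" "length cs = y" "B = out_he ` set cs" by blast
  have E: "set cs \<subseteq> E" "cs \<noteq> []" using cs(1) unfolding full_rel_cycles_def by auto
  have B: "B = walk.forward_orbit (out_he (cs ! 0))" using walk_orbit_of_full_rel_cycle[OF cs(1)] cs(3) by simp
  have "out_he (cs ! 0) \<in> HE" using out_he E by (simp add: subset_iff)
  then have "B \<in> BC" using B bdry_comps_eq by blast
  moreover have "\<not> he_marked (out_he a)" if "a \<in> E" for a
    using out_he[OF that] marked_iff_no_out_arrow by simp
  then have "\<forall>c\<in>B. \<not> he_marked c" using cs(3) E by auto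
  moreover have "B \<subseteq> HE" using cs(3) E out_he by auto
  ultimately show "B \<in> {B \<in> BC. n_marked B = 0 \<and> c_val V E s t R B = int y}"
    using n_marked_eq_0_iff n_lam_ends_eq_card card_out_he_full_rel_cycle[OF cs(1)] cs
    unfolding c_val_def by auto
qed

lemma card_unmarked_bdry_comps:
  "card {B \<in> BC. n_marked B = 0 \<and> c_val V E s t R B = int y}
     = card (rot_class ` {cs \<in> full_rel_cycles E R. length cs = y})"
proof -
  let ?C = "{cs \<in> full_rel_cycles E R. length cs = y}"
  have "card ((\<lambda>cs. out_he ` set cs) ` ?C) = card (set ` ?C)"
  proof (rule card_image_eq_if_same_fibres)
    fix cs cs' assume "cs \<in> ?C" "cs' \<in> ?C"
    then show "out_he ` set cs = out_he ` set cs' \<longleftrightarrow> set cs = set cs'"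
      using inj_on_image_eq_iff[OF inj_on_out_he] unfolding full_rel_cycles_def by auto
  qed
  also have "\<dots> = card (rot_class ` ?C)"
    by (rule card_image_eq_if_same_fibres) (auto simp: rot_class_eq_iff_set_eq)
  finally show ?thesis unfolding unmarked_bdry_comps_eq .
qed

end

theorem mainTheorem14:
  fixes V :: "'v set" and E :: "'a set" and s t :: "'a \<Rightarrow> 'v" and R :: "('a \<times> 'a) set"
  assumes "gentle V E s t R" and "connected_quiver V E s t" and "E \<noteq> {}"
  shows "(\<forall>x y. AG_phi V E s t R x y
            = card {B \<in> bdry_comps V E s t R. n_marked B = x \<and> c_val V E s t R B = int y})
       \<and> (\<forall>B \<in> bdry_comps V E s t R. n_marked B \<noteq> 0 \<longrightarrow>
            c_val V E s t R B = (\<Sum>c \<in> {c \<in> B. he_marked c}. int (piece_sides V E s t R c) - 2))"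
proof -
  interpret gentle_quiver V E s t R using assms by unfold_locales
  have "AG_phi V E s t R x y = card {B \<in> BC. n_marked B = x \<and> c_val V E s t R B = int y}" for x y
  proof (cases "x = 0")
    case True
    have no_run: "{m \<in> MB. AG_k V E s t R m = 0 \<and> AG_l V E s t R m = y} = {}"
      using AG_k_eq_period AG.period by fastforce
    show ?thesis unfolding AG_phi_def True no_run by (simp add: card_unmarked_bdry_comps)
  next
    case False
    then show ?thesis using card_marked_bdry_comps unfolding AG_phi_def by simp
  qed
  then show ?thesis using c_val_eq_sum_piece_sides by blast
qed

end
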